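(* Let $n\ge p\ge1$, $\lambda>0$, $0<\varepsilon<\frac34$, $N\ge1$, and let $f=\frac1N\sum_{i=1}^Nf_i$ with each $f_i:\mathbb{R}^{n\times p}\to\mathbb{R}$ twice continuously differentiable. Let $\mathrm{St}(p,n)^\varepsilon$, $\mu,\nu,\mathcal{L},L_g$ be as in the context (built from $f$). Assume there is $B>0$ with $\frac1N\sum_{i=1}^N\|\Lambda_i(X)-\Lambda(X)\|^2\le B$ for all $X\in\mathrm{St}(p,n)^\varepsilon$. Let $\tilde a=\sup_{X\in\mathrm{St}(p,n)^\varepsilon,\,i\in\{1,\dots,N\}}\|\mathrm{grad}f_i(X)\|$ and $\eta^*=\eta^*(\tilde a,\varepsilon,\lambda)$. Let $X_0\in\mathrm{St}(p,n)^\varepsilon$ and $X_{k+1}=X_k-\eta_k\Lambda_{i_k}(X_k)$, where $i_0,i_1,\dots$ are independent and uniform on $\{1,\dots,N\}$, and $\eta_k\le\min\left(\frac1{2L_g},\frac{\nu}{4\lambda^2L_g(1+\varepsilon)},\eta^*\right)$. Then for every $k$, $$\mathbb{E}_{i_k}[\mathcal{L}(X_{k+1})]\le\mathcal{L}(X_k)-\frac{\eta_k}{4}\|\mathrm{grad}f(X_k)\|^2-\frac{\eta_k\nu}{2}\mathcal{N}(X_k)+\frac{L_gB\eta_k^2}{2},$$ where $\mathbb{E}_{i_k}$ denotes expectation over $i_k$ only (conditionally on $X_k$).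
   Context: Frobenius norm/inner product; $\mathrm{sym}(M)=\frac12(M+M^\top)$, $\mathrm{skew}(M)=\frac12(M-M^\top)$; $\mathrm{St}(p,n)^\varepsilon=\{X:\|X^\top X-I_p\|\le\varepsilon\}$; $\mathcal{N}(X)=\frac14\|X^\top X-I_p\|^2$; for any $g$, $\mathrm{grad}g(X)=\mathrm{skew}(\nabla g(X)X^\top)X$; $\Lambda(X)=\mathrm{grad}f(X)+\lambda X(X^\top X-I_p)$ and $\Lambda_i(X)=\mathrm{grad}f_i(X)+\lambda X(X^\top X-I_p)$. $L>0$: Lipschitz constant of $\nabla f$ on $\mathrm{St}(p,n)^\varepsilon$; $L'=\max_{\mathrm{St}(p,n)^\varepsilon}\|\nabla f\|$; $\hat L=\max(L,L')$; $s=\sup_{\mathrm{St}(p,n)^\varepsilon}\|\mathrm{sym}(X^\top\nabla f(X))\|$; $\mu\ge\frac{2}{3-4\varepsilon}\big(L(1-\varepsilon)+3s+\hat L^2\frac{(1+\varepsilon)^2}{\lambda(1-\varepsilon)}\big)$; $\nu=\lambda\mu$; $\mathcal{L}(X)=f(X)-\frac12\langle\mathrm{sym}(X^\top\nabla f(X)),X^\top X-I_p\rangle+\mu\mathcal{N}(X)$; $L_g>0$ is such that $\nabla\mathcal{L}$ is $L_g$-Lipschitz on $\mathrm{St}(p,n)^\varepsilon$. Safeguard: $\eta^*(\tilde a,\varepsilon,\lambda)=\min\{Q,\frac1{2\lambda}\}$, $Q=\inf_{a\in(0,\tilde a],d\in(0,\varepsilon]}\frac{\lambda(1-\varepsilon)d+a\sqrt{(\varepsilon-d)/2}}{a^2+\lambda^2(1+\varepsilon)d^2}$.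 *)

theory Defs
  imports "HOL-Analysis.Analysis" "HOL-Probability.Probability_Mass_Function"
begin

text \<open>Matrices in R^(n x p) are rendered as real^'p^'n (rows indexed by 'n, columns by 'p).
  The norm and inner product on this type are the Frobenius norm / inner product.\<close>

definition Stiefel_eps :: "real \<Rightarrow> (real^'p^'n) set" where
  "Stiefel_eps eps = {X. norm (transpose X ** X - mat 1) \<le> eps}"

definition Ncal :: "real^'p^'n \<Rightarrow> real" where
  "Ncal X = (1/4) * (norm (transpose X ** X - mat 1))\<^sup>2"

definition msym :: "real^'m^'m \<Rightarrow> real^'m^'m" where
  "msym M = (1/2) *\<^sub>R (M + transpose M)"

definition mskew :: "real^'m^'m \<Rightarrow> real^'m^'m" where
  "mskew M = (1/2) *\<^sub>R (M - transpose M)"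

definition egrad :: "('a::real_inner \<Rightarrow> real) \<Rightarrow> 'a \<Rightarrow> 'a" where
  "egrad g X = (SOME G. (g has_derivative (\<lambda>H. G \<bullet> H)) (at X))"

definition rgrad :: "(real^'p^'n \<Rightarrow> real) \<Rightarrow> real^'p^'n \<Rightarrow> real^'p^'n" where
  "rgrad g X = mskew (egrad g X ** transpose X) ** X"

definition Lam :: "(real^'p^'n \<Rightarrow> real) \<Rightarrow> real \<Rightarrow> real^'p^'n \<Rightarrow> real^'p^'n" where
  "Lam g lam X = rgrad g X + lam *\<^sub>R (X ** (transpose X ** X - mat 1))"

definition Lagr :: "(real^'p^'n \<Rightarrow> real) \<Rightarrow> real \<Rightarrow> real^'p^'n \<Rightarrow> real" where
  "Lagr f mu X = f X - (1/2) * (msym (transpose X ** egrad f X) \<bullet> (transpose X ** X - mat 1))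
                 + mu * Ncal X"

definition C2 :: "('a::euclidean_space \<Rightarrow> real) \<Rightarrow> bool" where
  "C2 g \<longleftrightarrow> (\<exists>G G'. (\<forall>x. (g has_derivative (\<lambda>h. G x \<bullet> h)) (at x)) \<and>
                    (\<forall>x. (G has_derivative blinfun_apply (G' x)) (at x)) \<and>
                    continuous_on UNIV G')"

text \<open>Safeguard eta*(a~, eps, lambda) = min{Q, 1/(2 lambda)}, with the convention
  that the infimum over an empty index set is +infinity.\<close>
definition eta_star :: "real \<Rightarrow> real \<Rightarrow> real \<Rightarrow> real" where
  "eta_star atil eps lam =
     (let S = {(lam * (1 - eps) * d + a * sqrt ((eps - d) / 2)) / (a\<^sup>2 + lam\<^sup>2 * (1 + eps) * d\<^sup>2)
               | a d. 0 < a \<and> a \<le> atil \<and> 0 < d \<and> d \<le> eps}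
      in if S = {} then 1 / (2 * lam) else min (Inf S) (1 / (2 * lam)))"

end

theory Submission
  imports Defs
begin

text \<open>The safeguard keeps every landing step \<open>X - tau Lambda_i(X)\<close>, \<open>0 <= tau <= eta\<close>, inside
  the tube \<open>St(p,n)^eps\<close>: the normal part \<open>lambda X (X^T X - I)\<close> contracts the defect
  \<open>X^T X - I\<close> and the tangent part is too short to undo this. So the descent lemma for the
  \<open>L_g\<close>-Lipschitz gradient of the merit function applies to each sampled step, and averaging over the
  uniform index gives
  \<open>E L(X - eta Lambda_i) <= L(X) - eta <grad L(X), Lambda(X)> + L_g eta^2/2 (|Lambda(X)|^2 + B)\<close>.
  Differentiating \<open>L\<close> along \<open>Lambda = skew(nabla f X^T) X + lambda X (X^T X - I)\<close>, the tangent
  part contributes \<open>|skew(nabla f X^T)|^2 >= |grad f|^2/(1+eps)\<close> and the normal part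
  \<open>lambda mu |X (X^T X - I)|^2\<close>; the cross terms are bounded through \<open>L\<close>, \<open>L'\<close>, \<open>s\<close> and the
  Hessian bound \<open>L\<close>, and the lower bound on \<open>mu\<close> absorbs them, so that
  \<open><grad L, Lambda> >= |grad f|^2/2 + nu |X^T X - I|^2/4\<close>. The step-size bounds make the
  second-order term at most half of this.\<close>

section \<open>Matrix calculus with the Frobenius inner product\<close>

lemma inner_matrix_eq_sum: "(A::real^'m^'n) \<bullet> B = (\<Sum>i\<in>UNIV. \<Sum>j\<in>UNIV. A$i$j * B$i$j)"
  by (simp add: inner_vec_def)

lemma power2_norm_vec_eq_sum: "(norm (v::real^'m))\<^sup>2 = (\<Sum>j\<in>UNIV. (v$j)\<^sup>2)"
  unfolding power2_norm_eq_inner by (simp add: inner_vec_def power2_eq_square)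

lemma power2_norm_matrix_eq_sum: "(norm (A::real^'m^'n))\<^sup>2 = (\<Sum>i\<in>UNIV. \<Sum>j\<in>UNIV. (A$i$j)\<^sup>2)"
  unfolding power2_norm_eq_inner by (simp add: inner_matrix_eq_sum power2_eq_square)

lemma matrix_mult_nth: "((A::real^'k^'n) ** (B::real^'m^'k))$i$j = (\<Sum>k\<in>UNIV. A$i$k * B$k$j)"
  by (simp add: matrix_matrix_mult_def)

lemma transpose_nth [simp]: "transpose (A::real^'m^'n) $ i $ j = A$j$i"
  by (simp add: transpose_def)

lemma inner_matrix_mult_left: "((A::real^'k^'n) ** (B::real^'m^'k)) \<bullet> C = B \<bullet> (transpose A ** C)"
proof -
  have "(A ** B) \<bullet> C = (\<Sum>i\<in>UNIV. \<Sum>j\<in>UNIV. \<Sum>k\<in>UNIV. A$i$k * B$k$j * C$i$j)"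
    by (simp add: inner_matrix_eq_sum matrix_mult_nth sum_distrib_right)
  also have "\<dots> = (\<Sum>k\<in>UNIV. \<Sum>j\<in>UNIV. \<Sum>i\<in>UNIV. A$i$k * B$k$j * C$i$j)"
    by (subst sum.swap, subst (1 2) sum.swap) simp
  also have "\<dots> = B \<bullet> (transpose A ** C)"
    by (simp add: inner_matrix_eq_sum matrix_mult_nth sum_distrib_left mult_ac)
  finally show ?thesis .
qed

lemma inner_transpose: "transpose (A::real^'m^'n) \<bullet> transpose B = A \<bullet> B"
  unfolding inner_matrix_eq_sum by (subst sum.swap) simp

lemma norm_transpose: "norm (transpose (A::real^'m^'n)) = norm A"
  by (simp add: norm_eq_sqrt_inner inner_transpose)

lemma inner_matrix_mult_right: "((A::real^'k^'n) ** (B::real^'m^'k)) \<bullet> C = A \<bullet> (C ** transpose B)"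
proof -
  have "(A ** B) \<bullet> C = (transpose B ** transpose A) \<bullet> transpose C"
    by (simp add: inner_transpose flip: matrix_transpose_mul)
  also have "\<dots> = transpose A \<bullet> transpose (C ** transpose B)"
    by (simp add: inner_matrix_mult_left matrix_transpose_mul)
  finally show ?thesis by (simp add: inner_transpose)
qed

lemma norm_matrix_mult_le: "norm ((A::real^'k^'n) ** (B::real^'m^'k)) \<le> norm A * norm B"
proof -
  have "(norm (A ** B))\<^sup>2 = (\<Sum>i\<in>UNIV. \<Sum>j\<in>UNIV. (row i A \<bullet> column j B)\<^sup>2)"
    by (simp add: power2_norm_matrix_eq_sum matrix_mult_nth inner_vec_def row_def column_def)
  also have "\<dots> \<le> (\<Sum>i\<in>UNIV. \<Sum>j\<in>UNIV. (norm (row i A))\<^sup>2 * (norm (column j B))\<^sup>2)"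
  proof (intro sum_mono)
    fix i j
    have "\<bar>row i A \<bullet> column j B\<bar>\<^sup>2 \<le> (norm (row i A) * norm (column j B))\<^sup>2"
      by (rule power_mono[OF Cauchy_Schwarz_ineq2]) simp
    then show "(row i A \<bullet> column j B)\<^sup>2 \<le> (norm (row i A))\<^sup>2 * (norm (column j B))\<^sup>2"
      by (simp add: power_mult_distrib)
  qed
  also have "\<dots> = (\<Sum>i\<in>UNIV. (norm (row i A))\<^sup>2) * (\<Sum>j\<in>UNIV. (norm (column j B))\<^sup>2)"
    by (simp add: sum_product)
  also have "(\<Sum>i\<in>UNIV. (norm (row i A))\<^sup>2) = (norm A)\<^sup>2"
    by (simp only: power2_norm_vec_eq_sum power2_norm_matrix_eq_sum row_def vec_lambda_beta)
  also have "(\<Sum>j\<in>UNIV. (norm (column j B))\<^sup>2) = (norm B)\<^sup>2"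
    unfolding power2_norm_vec_eq_sum power2_norm_matrix_eq_sum column_def vec_lambda_beta
    by (rule sum.swap)
  finally have "(norm (A ** B))\<^sup>2 \<le> (norm A * norm B)\<^sup>2" by (simp add: power_mult_distrib)
  then show ?thesis by (rule power2_le_imp_le) simp
qed

lemma bounded_bilinear_matrix_mult:
  "bounded_bilinear ((**) :: real^'k^'n \<Rightarrow> real^'m^'k \<Rightarrow> real^'m^'n)"
proof
  fix a a' :: "real^'k^'n" and b b' :: "real^'m^'k" and r :: real
  show "(a + a') ** b = a ** b + a' ** b"
    by (simp add: matrix_matrix_mult_def vec_eq_iff sum.distrib algebra_simps)
  show "a ** (b + b') = a ** b + a ** b'" by (rule matrix_add_ldistrib)
  show "(r *\<^sub>R a) ** b = r *\<^sub>R (a ** b)" by (simp add: scalar_matrix_assoc)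
  show "a ** (r *\<^sub>R b) = r *\<^sub>R (a ** b)" by (simp add: matrix_scalar_ac scalar_matrix_assoc)
  show "\<exists>K. \<forall>a b. norm ((a::real^'k^'n) ** (b::real^'m^'k)) \<le> norm a * norm b * K"
    by (rule exI[of _ 1]) (simp add: norm_matrix_mult_le)
qed

lemmas matrix_mult_add_left = bounded_bilinear.add_left[OF bounded_bilinear_matrix_mult]
lemmas matrix_mult_add_right = bounded_bilinear.add_right[OF bounded_bilinear_matrix_mult]
lemmas matrix_mult_diff_left = bounded_bilinear.diff_left[OF bounded_bilinear_matrix_mult]
lemmas matrix_mult_diff_right = bounded_bilinear.diff_right[OF bounded_bilinear_matrix_mult]
lemmas matrix_mult_minus_left = bounded_bilinear.minus_left[OF bounded_bilinear_matrix_mult]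
lemmas matrix_mult_minus_right = bounded_bilinear.minus_right[OF bounded_bilinear_matrix_mult]
lemmas matrix_mult_scaleR_left = bounded_bilinear.scaleR_left[OF bounded_bilinear_matrix_mult]
lemmas matrix_mult_scaleR_right = bounded_bilinear.scaleR_right[OF bounded_bilinear_matrix_mult]
lemmas matrix_mult_sum_left = bounded_bilinear.sum_left[OF bounded_bilinear_matrix_mult]

lemma transpose_add: "transpose ((A::real^'m^'n) + B) = transpose A + transpose B"
  by (simp add: vec_eq_iff)

lemma transpose_diff: "transpose ((A::real^'m^'n) - B) = transpose A - transpose B"
  by (simp add: vec_eq_iff)

lemma transpose_minus: "transpose (- (A::real^'m^'n)) = - transpose A"
  by (simp add: vec_eq_iff)

lemma transpose_zero: "transpose (0::real^'m^'n) = 0"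
  by (simp add: vec_eq_iff)

lemma transpose_sum: "transpose (\<Sum>i\<in>I. (A i::real^'m^'n)) = (\<Sum>i\<in>I. transpose (A i))"
  by (induct I rule: infinite_finite_induct) (auto simp: transpose_zero transpose_add)

lemma bounded_linear_transpose: "bounded_linear (transpose :: real^'m^'n \<Rightarrow> real^'n^'m)"
  by (rule bounded_linear_intro[where K=1]) (simp_all add: transpose_add transpose_scalar norm_transpose)

text \<open>On matrices \<open>*\<close> is the entrywise product, which \<open>algebra_simps\<close> produces from numeral
  multiples; these rules turn it back into scaling.\<close>

lemma matrix_times_numeral: "(A::real^'m^'n) * numeral k = (numeral k::real) *\<^sub>R A"
  and matrix_numeral_times: "numeral k * (A::real^'m^'n) = (numeral k::real) *\<^sub>R A"
  by (simp_all add: vec_eq_iff)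

lemmas matrix_algebra_simps =
  matrix_times_numeral matrix_numeral_times
  matrix_mult_add_left matrix_mult_add_right matrix_mult_diff_left matrix_mult_diff_right
  matrix_mult_minus_left matrix_mult_minus_right matrix_mult_scaleR_left matrix_mult_scaleR_right
  transpose_add transpose_diff transpose_minus transpose_zero transpose_scalar
  matrix_transpose_mul matrix_mul_assoc

lemma inner_symmetric_skew_eq_0:
  assumes "transpose (S::real^'m^'m) = S" and "transpose K = - K"
  shows "S \<bullet> K = 0"
proof -
  have "S \<bullet> K = transpose S \<bullet> transpose K" by (simp add: inner_transpose)
  also have "\<dots> = - (S \<bullet> K)" using assms by simp
  finally show ?thesis by simp
qed

lemma transpose_msym: "transpose (msym M) = msym (M::real^'m^'m)"
  by (simp add: msym_def matrix_algebra_simps add.commute)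

lemma transpose_mskew: "transpose (mskew M) = - mskew (M::real^'m^'m)"
  by (simp add: mskew_def matrix_algebra_simps algebra_simps)

lemma inner_msym_symmetric:
  assumes "transpose (D::real^'m^'m) = D"
  shows "msym M \<bullet> D = M \<bullet> D"
  using inner_transpose[of M D] assms by (simp add: msym_def inner_add_left)

lemma inner_mult_symmetric_eq_msym:
  assumes "transpose (M::real^'p^'p) = M"
  shows "G \<bullet> ((X::real^'p^'n) ** M) = msym (transpose X ** G) \<bullet> M"
proof -
  have "G \<bullet> (X ** M) = M \<bullet> (transpose X ** G)"
    by (subst inner_commute) (simp add: inner_matrix_mult_left)
  also have "\<dots> = msym (transpose X ** G) \<bullet> M"
    unfolding inner_msym_symmetric[OF assms] by (rule inner_commute)
  finally show ?thesis .
qed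

lemma inner_mskew_self: "mskew (M::real^'m^'m) \<bullet> M = (norm (mskew M))\<^sup>2"
proof -
  have "M = msym M + mskew M" by (simp add: msym_def mskew_def algebra_simps vec_eq_iff)
  then have "mskew M \<bullet> M = mskew M \<bullet> msym M + mskew M \<bullet> mskew M"
    by (metis inner_add_right)
  also have "mskew M \<bullet> msym M = 0"
    by (subst inner_commute, rule inner_symmetric_skew_eq_0) (simp_all add: transpose_msym transpose_mskew)
  finally show ?thesis by (simp add: power2_norm_eq_inner)
qed

lemma mskew_add: "mskew ((M::real^'m^'m) + N) = mskew M + mskew N"
  and mskew_scaleR: "mskew (c *\<^sub>R M) = c *\<^sub>R mskew M"
  and mskew_sum: "mskew (\<Sum>i\<in>I. A i) = (\<Sum>i\<in>I. mskew (A i))"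
  by (simp_all add: mskew_def matrix_algebra_simps algebra_simps transpose_sum
      scaleR_sum_right sum_subtractf)

lemma msym_add: "msym ((M::real^'m^'m) + N) = msym M + msym N"
  and msym_scaleR: "msym (c *\<^sub>R M) = c *\<^sub>R msym M"
  by (simp_all add: msym_def matrix_algebra_simps algebra_simps)

lemma bounded_linear_msym: "bounded_linear (msym :: real^'m^'m \<Rightarrow> real^'m^'m)"
proof (rule bounded_linear_intro[where K=1])
  fix M :: "real^'m^'m"
  have "norm (msym M) \<le> (1/2) * (norm M + norm (transpose M))"
    unfolding msym_def by (simp add: norm_triangle_ineq)
  then show "norm (msym M) \<le> norm M * 1" by (simp add: norm_transpose)
qed (simp_all add: msym_add msym_scaleR)

lemma bounded_linear_mskew: "bounded_linear (mskew :: real^'m^'m \<Rightarrow> real^'m^'m)"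
proof (rule bounded_linear_intro[where K=1])
  fix M :: "real^'m^'m"
  have "norm (mskew M) \<le> (1/2) * (norm M + norm (transpose M))"
    unfolding mskew_def by (simp add: norm_triangle_ineq4)
  then show "norm (mskew M) \<le> norm M * 1" by (simp add: norm_transpose)
qed (simp_all add: mskew_add mskew_scaleR)

definition orth_defect :: "real^'p^'n \<Rightarrow> real^'p^'p" where
  "orth_defect X = transpose X ** X - mat 1"

lemma Stiefel_eps_iff: "X \<in> Stiefel_eps eps \<longleftrightarrow> norm (orth_defect X) \<le> eps"
  by (simp add: Stiefel_eps_def orth_defect_def)

lemma Ncal_eq: "Ncal X = (norm (orth_defect X))\<^sup>2 / 4"
  by (simp add: Ncal_def orth_defect_def)

lemma transpose_orth_defect: "transpose (orth_defect X) = orth_defect X"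
  by (simp add: orth_defect_def matrix_algebra_simps)

lemma transpose_mult_self: "transpose X ** X = orth_defect X + mat 1"
  by (simp add: orth_defect_def)

lemma power2_norm_left_mult_eq:
  "(norm ((X::real^'p^'n) ** B))\<^sup>2 = (norm B)\<^sup>2 + B \<bullet> (orth_defect X ** B)"
proof -
  have "(norm (X ** B))\<^sup>2 = B \<bullet> (transpose X ** X ** B)"
    by (simp add: power2_norm_eq_inner inner_matrix_mult_left matrix_mul_assoc)
  then show ?thesis
    by (simp add: transpose_mult_self matrix_algebra_simps inner_add_right power2_norm_eq_inner)
qed

lemma abs_inner_mult_le: "\<bar>(B::real^'m^'k) \<bullet> ((D::real^'k^'k) ** B)\<bar> \<le> norm D * (norm B)\<^sup>2"
proof -
  have "\<bar>B \<bullet> (D ** B)\<bar> \<le> norm B * norm (D ** B)" by (rule Cauchy_Schwarz_ineq2)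
  also have "\<dots> \<le> norm B * (norm D * norm B)" by (rule mult_left_mono[OF norm_matrix_mult_le]) simp
  finally show ?thesis by (simp add: power2_eq_square mult_ac)
qed

lemma power2_norm_left_mult_bounds:
  fixes X :: "real^'p^'n" and B :: "real^'m^'p"
  shows "(norm (X ** B))\<^sup>2 \<le> (1 + norm (orth_defect X)) * (norm B)\<^sup>2"
    and "(1 - norm (orth_defect X)) * (norm B)\<^sup>2 \<le> (norm (X ** B))\<^sup>2"
  using power2_norm_left_mult_eq[of X B] abs_inner_mult_le[of B "orth_defect X"]
  by (auto simp: algebra_simps abs_le_iff)

lemma power2_norm_transpose_left_mult_le:
  fixes X :: "real^'p^'n" and C :: "real^'m^'n"
  shows "(norm (transpose X ** C))\<^sup>2 \<le> (1 + norm (orth_defect X)) * (norm C)\<^sup>2"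
proof -
  let ?d = "norm (orth_defect X)" and ?y = "norm (transpose X ** C)"
  have d0: "0 \<le> ?d" by simp
  have "?y\<^sup>2 = C \<bullet> (X ** (transpose X ** C))"
    by (simp add: power2_norm_eq_inner inner_matrix_mult_left)
  also have "\<dots> \<le> norm C * norm (X ** (transpose X ** C))" by (rule norm_cauchy_schwarz)
  also have "norm (X ** (transpose X ** C)) \<le> sqrt (1 + ?d) * ?y"
  proof (rule power2_le_imp_le)
    show "(norm (X ** (transpose X ** C)))\<^sup>2 \<le> (sqrt (1 + ?d) * ?y)\<^sup>2"
      using power2_norm_left_mult_bounds(1)[of X "transpose X ** C"] d0
      by (simp add: power_mult_distrib)
  qed (use d0 in simp)
  finally have "?y\<^sup>2 \<le> norm C * (sqrt (1 + ?d) * ?y)" by (simp add: mult_left_mono)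
  then have "?y \<le> norm C * sqrt (1 + ?d)"
    by (cases "?y = 0") (auto simp: power2_eq_square mult_ac)
  then have "?y\<^sup>2 \<le> (norm C * sqrt (1 + ?d))\<^sup>2" by (rule power_mono) simp
  then show ?thesis using d0 by (simp add: power_mult_distrib mult_ac)
qed

lemma power2_norm_right_mult_le:
  fixes X :: "real^'p^'n" and A :: "real^'n^'m"
  shows "(norm (A ** X))\<^sup>2 \<le> (1 + norm (orth_defect X)) * (norm A)\<^sup>2"
  using power2_norm_transpose_left_mult_le[of X "transpose A"]
  by (metis matrix_transpose_mul norm_transpose transpose_transpose)

lemma power2_norm_normal_le:
  assumes "X \<in> Stiefel_eps eps"
  shows "(norm (X ** orth_defect X))\<^sup>2 \<le> (1 + eps) * (norm (orth_defect X))\<^sup>2"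
proof -
  have "(1 + norm (orth_defect X)) * (norm (orth_defect X))\<^sup>2 \<le> (1 + eps) * (norm (orth_defect X))\<^sup>2"
    using assms by (intro mult_right_mono) (simp_all add: Stiefel_eps_iff)
  then show ?thesis using power2_norm_left_mult_bounds(1)[of X "orth_defect X"] by linarith
qed

lemma inner_egrad_eq:
  fixes g :: "'a::euclidean_space \<Rightarrow> real"
  assumes d: "(g has_derivative D) (at X)"
  shows "egrad g X \<bullet> H = D H"
proof -
  have lin: "linear D" using d by (simp add: has_derivative_def bounded_linear.linear)
  define G where "G = (\<Sum>b\<in>Basis. D b *\<^sub>R b)"
  have "D H = G \<bullet> H" for H
  proof -
    have "D H = D (\<Sum>b\<in>Basis. (H \<bullet> b) *\<^sub>R b)" by (simp add: euclidean_representation)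
    also have "\<dots> = (\<Sum>b\<in>Basis. (H \<bullet> b) * D b)"
      by (simp add: linear_sum[OF lin] linear_scale[OF lin])
    also have "\<dots> = G \<bullet> H"
      unfolding G_def inner_sum_left by (rule sum.cong) (simp_all add: inner_commute)
    finally show ?thesis .
  qed
  then have "\<exists>G. (g has_derivative (\<lambda>H. G \<bullet> H)) (at X)" using d by (metis ext)
  then have "(g has_derivative (\<lambda>H. egrad g X \<bullet> H)) (at X)"
    unfolding egrad_def by (rule someI_ex)
  then have "(\<lambda>H. egrad g X \<bullet> H) = D" using d by (rule has_derivative_unique)
  then show ?thesis by metis
qed

lemma egrad_eqI:
  fixes g :: "'a::euclidean_space \<Rightarrow> real"
  assumes "(g has_derivative (\<lambda>H. G \<bullet> H)) (at X)"
  shows "egrad g X = G"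
proof -
  have "(egrad g X - G) \<bullet> (egrad g X - G) = 0"
    using inner_egrad_eq[OF assms] by (simp add: inner_diff_left)
  then show ?thesis by simp
qed

lemmas has_derivative_matrix_mult = bounded_bilinear.FDERIV[OF bounded_bilinear_matrix_mult]
lemmas has_derivative_transpose = bounded_linear.has_derivative[OF bounded_linear_transpose]
lemmas has_derivative_msym = bounded_linear.has_derivative[OF bounded_linear_msym]

lemma has_derivative_orth_defect:
  "(orth_defect has_derivative (\<lambda>H. transpose H ** X + transpose X ** H)) (at (X::real^'p^'n))"
proof -
  have "((\<lambda>Y. transpose Y ** Y) has_derivative (\<lambda>H. transpose X ** H + transpose H ** X)) (at X)"
    by (rule has_derivative_matrix_mult[OF has_derivative_transpose[OF has_derivative_ident]
          has_derivative_ident])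
  then have "((\<lambda>Y. transpose Y ** Y - mat 1) has_derivative
                (\<lambda>H. transpose X ** H + transpose H ** X)) (at X)"
    by (rule has_derivative_diff[OF _ has_derivative_const, simplified])
  then show ?thesis unfolding orth_defect_def[abs_def]
    by (rule has_derivative_eq_rhs) (auto simp: add.commute)
qed

lemma has_derivative_Lagr:
  fixes f :: "real^'p^'n \<Rightarrow> real"
  assumes f: "\<And>Y. (f has_derivative (\<lambda>H. Gf Y \<bullet> H)) (at Y)"
    and Gf: "(Gf has_derivative Hf) (at X)"
  shows "(Lagr f mu has_derivative (\<lambda>H. Gf X \<bullet> H
      - 1/2 * (msym (transpose H ** Gf X + transpose X ** Hf H) \<bullet> orth_defect X
               + msym (transpose X ** Gf X) \<bullet> (transpose H ** X + transpose X ** H))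
      + mu * (1/2 * (orth_defect X \<bullet> (transpose H ** X + transpose X ** H))))) (at X)"
proof -
  have "egrad f = Gf" using egrad_eqI[OF f] by auto
  then have Lagr: "Lagr f mu = (\<lambda>Y. f Y - 1/2 * (msym (transpose Y ** Gf Y) \<bullet> orth_defect Y)
                                + mu * (1/4 * (orth_defect Y \<bullet> orth_defect Y)))"
    by (auto simp: Lagr_def Ncal_def orth_defect_def power2_norm_eq_inner)
  have "((\<lambda>Y. msym (transpose Y ** Gf Y)) has_derivative
          (\<lambda>H. msym (transpose X ** Hf H + transpose H ** Gf X))) (at X)"
    by (rule has_derivative_msym[OF has_derivative_matrix_mult[OF
          has_derivative_transpose[OF has_derivative_ident] Gf]])
  note d = has_derivative_inner[OF this has_derivative_orth_defect]
    has_derivative_inner[OF has_derivative_orth_defect has_derivative_orth_defect]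
  have "(Lagr f mu has_derivative (\<lambda>H. Gf X \<bullet> H
      - 1/2 * (msym (transpose X ** Gf X) \<bullet> (transpose H ** X + transpose X ** H)
               + msym (transpose X ** Hf H + transpose H ** Gf X) \<bullet> orth_defect X)
      + mu * (1/4 * (orth_defect X \<bullet> (transpose H ** X + transpose X ** H)
                     + (transpose H ** X + transpose X ** H) \<bullet> orth_defect X)))) (at X)"
    unfolding Lagr by (intro has_derivative_add has_derivative_diff has_derivative_mult_right f d)
  then show ?thesis
    by (rule has_derivative_eq_rhs) (auto simp: algebra_simps inner_commute)
qed

section \<open>The landing field\<close>

definition landing :: "real^'n^'n \<Rightarrow> real \<Rightarrow> real^'p^'n \<Rightarrow> real^'p^'n" where
  "landing M lam X = mskew M ** X + lam *\<^sub>R (X ** orth_defect X)"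

lemma Lam_eq_landing: "Lam g lam X = landing (egrad g X ** transpose X) lam X"
  by (simp add: Lam_def landing_def rgrad_def orth_defect_def)

lemma rgrad_eq: "rgrad g X = mskew (egrad g X ** transpose X) ** X"
  by (simp add: rgrad_def)

lemma inner_mskew_mult_normal_eq_0: "(mskew M ** X) \<bullet> (X ** orth_defect X) = 0"
proof -
  have "(mskew M ** X) \<bullet> (X ** orth_defect X) = orth_defect X \<bullet> (transpose X ** mskew M ** X)"
    by (simp add: inner_commute inner_matrix_mult_left matrix_mul_assoc)
  also have "\<dots> = 0"
    by (rule inner_symmetric_skew_eq_0[OF transpose_orth_defect])
      (simp add: transpose_mskew matrix_algebra_simps)
  finally show ?thesis .
qed

lemma power2_norm_landing:
  "(norm (landing M lam X))\<^sup>2 = (norm (mskew M ** X))\<^sup>2 + lam\<^sup>2 * (norm (X ** orth_defect X))\<^sup>2"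
  unfolding landing_def power2_norm_eq_inner
  by (simp add: inner_add_left inner_add_right inner_mskew_mult_normal_eq_0 power2_eq_square
      inner_commute[of "X ** orth_defect X" "mskew M ** X"])

lemma transpose_landing_mult_sym:
  "transpose (landing M lam X) ** X + transpose X ** landing M lam X
     = (2 * lam) *\<^sub>R (orth_defect X + orth_defect X ** orth_defect X)"
proof -
  let ?D = "orth_defect X"
  have tangent: "transpose (mskew M ** X) ** X + transpose X ** (mskew M ** X) = 0"
    by (simp add: transpose_mskew matrix_algebra_simps)
  have "transpose (X ** ?D) ** X = ?D + ?D ** ?D"
    by (simp add: matrix_transpose_mul transpose_orth_defect transpose_mult_self matrix_algebra_simps
        flip: matrix_mul_assoc)
  moreover have "transpose X ** (X ** ?D) = ?D + ?D ** ?D"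
    by (simp add: matrix_mul_assoc transpose_mult_self matrix_algebra_simps)
  moreover have "transpose (landing M lam X) ** X + transpose X ** landing M lam X
     = (transpose (mskew M ** X) ** X + transpose X ** (mskew M ** X))
       + lam *\<^sub>R (transpose (X ** ?D) ** X + transpose X ** (X ** ?D))"
    unfolding landing_def
    by (simp only: transpose_add transpose_scalar matrix_mult_add_left matrix_mult_add_right
        matrix_mult_scaleR_left matrix_mult_scaleR_right scaleR_add_right add_ac)
  ultimately show ?thesis
    unfolding tangent by (simp add: algebra_simps matrix_times_numeral matrix_numeral_times)
qed

text \<open>The derivative from \<open>has_derivative_Lagr\<close> in the direction \<open>V\<close> of the landing field;
  \<open>HV\<close> stands for the Hessian of \<open>f\<close> applied to \<open>V\<close>.\<close>

lemma Lagr_derivative_landing_eq: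
  fixes X G HV :: "real^'p^'n" and lam mu :: real
  defines "R \<equiv> mskew (G ** transpose X) ** X" and "W \<equiv> X ** orth_defect X"
    and "S \<equiv> msym (transpose X ** G)" and "V \<equiv> landing (G ** transpose X) lam X"
  shows "G \<bullet> V - 1/2 * (msym (transpose V ** G + transpose X ** HV) \<bullet> orth_defect X
               + S \<bullet> (transpose V ** X + transpose X ** V))
      + mu * (1/2 * (orth_defect X \<bullet> (transpose V ** X + transpose X ** V)))
    = (norm (mskew (G ** transpose X)))\<^sup>2 - 1/2 * (G \<bullet> (R ** orth_defect X)) - 1/2 * (HV \<bullet> W)
      - 3/2 * lam * (S \<bullet> (orth_defect X ** orth_defect X)) + lam * mu * (norm W)\<^sup>2"
proof -
  let ?D = "orth_defect X"
  have V: "V = R + lam *\<^sub>R W" by (simp add: V_def R_def W_def landing_def)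
  have symDD: "transpose (?D ** ?D) = ?D ** ?D"
    by (simp add: matrix_transpose_mul transpose_orth_defect)
  have GR: "G \<bullet> R = (norm (mskew (G ** transpose X)))\<^sup>2"
    unfolding R_def by (subst inner_commute) (simp add: inner_matrix_mult_right inner_mskew_self)
  have GW: "G \<bullet> W = S \<bullet> ?D"
    unfolding W_def S_def by (rule inner_mult_symmetric_eq_msym[OF transpose_orth_defect])
  have GWD: "G \<bullet> (W ** ?D) = S \<bullet> (?D ** ?D)"
    unfolding W_def S_def matrix_mul_assoc[symmetric] by (rule inner_mult_symmetric_eq_msym[OF symDD])
  have hess_term: "msym (transpose V ** G + transpose X ** HV) \<bullet> ?D
      = G \<bullet> (R ** ?D) + lam * (S \<bullet> (?D ** ?D)) + HV \<bullet> W"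
  proof -
    have "msym (transpose V ** G + transpose X ** HV) \<bullet> ?D = G \<bullet> (V ** ?D) + HV \<bullet> W"
      unfolding W_def
      by (simp add: inner_msym_symmetric[OF transpose_orth_defect] inner_add_left inner_matrix_mult_left)
    also have "V ** ?D = R ** ?D + lam *\<^sub>R (W ** ?D)" unfolding V by (simp add: matrix_algebra_simps)
    finally show ?thesis by (simp add: inner_add_right GWD)
  qed
  have DW: "?D \<bullet> (?D + ?D ** ?D) = (norm W)\<^sup>2"
    unfolding W_def power2_norm_left_mult_eq by (simp add: inner_add_right power2_norm_eq_inner)
  have sym: "transpose V ** X + transpose X ** V = (2*lam) *\<^sub>R (?D + ?D ** ?D)"
    unfolding V_def by (rule transpose_landing_mult_sym)
  have GV: "G \<bullet> V = (norm (mskew (G ** transpose X)))\<^sup>2 + lam * (S \<bullet> ?D)"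
    unfolding V by (simp add: inner_add_right GR GW)
  show ?thesis
    unfolding sym hess_term GV inner_scaleR_right DW by (simp add: inner_add_right algebra_simps)
qed

lemma orth_defect_step:
  "orth_defect ((X::real^'p^'n) - tau *\<^sub>R V)
     = orth_defect X - tau *\<^sub>R (transpose V ** X + transpose X ** V) + (tau * tau) *\<^sub>R (transpose V ** V)"
  unfolding orth_defect_def by (simp add: matrix_algebra_simps algebra_simps)

lemma norm_transpose_mult_self_le: "norm (transpose (V::real^'p^'n) ** V) \<le> (norm V)\<^sup>2"
  using norm_matrix_mult_le[of "transpose V" V] by (simp add: norm_transpose power2_eq_square)

lemma norm_matrix_square_le: "norm ((D::real^'m^'m) ** D) \<le> (norm D)\<^sup>2"
  using norm_matrix_mult_le[of D D] by (simp add: power2_eq_square)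

lemma norm_matrix_cube_le: "norm ((D::real^'m^'m) ** D ** D) \<le> (norm D)^3"
proof -
  have "norm (D ** D ** D) \<le> norm (D ** D) * norm D" by (rule norm_matrix_mult_le)
  also have "\<dots> \<le> (norm D)\<^sup>2 * norm D" by (rule mult_right_mono[OF norm_matrix_square_le]) simp
  finally show ?thesis by (simp add: power3_eq_cube power2_eq_square)
qed

lemma norm_orth_defect_landing_step_le:
  fixes X :: "real^'p^'n"
  assumes "0 \<le> tau" and "tau * lam \<le> 1/2" and "lam > 0"
  shows "norm (orth_defect (X - tau *\<^sub>R landing M lam X))
    \<le> (1 - 2*(tau*lam)) * norm (orth_defect X) + 2*(tau*lam) * (norm (orth_defect X))\<^sup>2
       + tau\<^sup>2 * ((norm (mskew M ** X))\<^sup>2 + lam\<^sup>2 * ((1 + norm (orth_defect X)) * (norm (orth_defect X))\<^sup>2))"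
proof -
  let ?D = "orth_defect X" and ?t = "tau*lam" and ?V = "landing M lam X"
  have "orth_defect (X - tau *\<^sub>R ?V)
     = ((1 - 2*?t) *\<^sub>R ?D - (2*?t) *\<^sub>R (?D ** ?D)) + (tau*tau) *\<^sub>R (transpose ?V ** ?V)"
    unfolding orth_defect_step transpose_landing_mult_sym by (simp add: algebra_simps)
  then have "norm (orth_defect (X - tau *\<^sub>R ?V))
     \<le> norm ((1 - 2*?t) *\<^sub>R ?D - (2*?t) *\<^sub>R (?D ** ?D)) + norm ((tau*tau) *\<^sub>R (transpose ?V ** ?V))"
    by (simp only: norm_triangle_ineq)
  also have "norm ((1 - 2*?t) *\<^sub>R ?D - (2*?t) *\<^sub>R (?D ** ?D))
      \<le> norm ((1 - 2*?t) *\<^sub>R ?D) + norm ((2*?t) *\<^sub>R (?D ** ?D))"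
    by (rule norm_triangle_ineq4)
  also have "\<dots> \<le> (1 - 2*?t) * norm ?D + (2*?t) * (norm ?D)\<^sup>2"
    using assms by (simp add: mult_left_mono norm_matrix_square_le)
  also have "norm ((tau*tau) *\<^sub>R (transpose ?V ** ?V)) \<le> tau\<^sup>2 * (norm ?V)\<^sup>2"
    using norm_transpose_mult_self_le[of ?V] by (simp add: power2_eq_square mult_left_mono)
  also have "(norm ?V)\<^sup>2 \<le> (norm (mskew M ** X))\<^sup>2 + lam\<^sup>2 * ((1 + norm ?D) * (norm ?D)\<^sup>2)"
    unfolding power2_norm_landing using power2_norm_left_mult_bounds(1)[of X ?D] by (simp add: mult_left_mono)
  finally show ?thesis by (simp add: mult_left_mono)
qed

lemma norm_orth_defect_normal_step_le:
  fixes X :: "real^'p^'n"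
  assumes tangent: "mskew M ** X = 0" and "0 \<le> tau" and "tau * lam \<le> 1/2" and "lam > 0"
  defines "t \<equiv> tau * lam" and "d \<equiv> norm (orth_defect X)"
  shows "norm (orth_defect (X - tau *\<^sub>R landing M lam X))
           \<le> (1 - 2*t) * d + (2*t - t*t) * d\<^sup>2 + (t*t) * d^3"
proof -
  let ?D = "orth_defect X" and ?V = "landing M lam X"
  have t0: "0 \<le> t" and "t \<le> 1/2"
    using assms by (simp_all add: t_def)
  then have t1: "t * t \<le> 2 * t" using mult_left_mono[of t 2 t] by (simp add: mult.commute)
  have "transpose ?V ** ?V = (lam*lam) *\<^sub>R (?D ** (transpose X ** X) ** ?D)"
    unfolding landing_def tangent by (simp add: matrix_algebra_simps transpose_orth_defect)
  also have "\<dots> = (lam*lam) *\<^sub>R (?D ** ?D + ?D ** ?D ** ?D)"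
    unfolding transpose_mult_self by (simp add: matrix_algebra_simps)
  finally have "orth_defect (X - tau *\<^sub>R ?V)
      = (1 - 2*t) *\<^sub>R ?D + (t*t - 2*t) *\<^sub>R (?D ** ?D) + (t*t) *\<^sub>R (?D ** ?D ** ?D)"
    unfolding orth_defect_step transpose_landing_mult_sym t_def by (simp add: algebra_simps)
  then have "norm (orth_defect (X - tau *\<^sub>R ?V))
      \<le> norm ((1 - 2*t) *\<^sub>R ?D) + norm ((t*t - 2*t) *\<^sub>R (?D ** ?D)) + norm ((t*t) *\<^sub>R (?D ** ?D ** ?D))"
    by (simp only: order_trans[OF norm_triangle_ineq add_right_mono[OF norm_triangle_ineq]])
  also have "\<dots> = (1 - 2*t) * d + (2*t - t*t) * norm (?D ** ?D) + (t*t) * norm (?D ** ?D ** ?D)"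
    using assms t1 by (simp add: t_def d_def)
  also have "\<dots> \<le> (1 - 2*t) * d + (2*t - t*t) * d\<^sup>2 + (t*t) * d^3"
    using t0 t1 unfolding d_def
    by (intro add_mono order_refl mult_left_mono norm_matrix_square_le norm_matrix_cube_le) simp_all
  finally show ?thesis .
qed

lemma normal_step_polynomial_le:
  fixes t d :: real
  assumes "0 \<le> t" and "t \<le> 1/2" and "0 \<le> d" and "d < 1"
  shows "(1 - 2*t) * d + (2*t - t*t) * d\<^sup>2 + (t*t) * d^3 \<le> d"
    and "0 < t \<Longrightarrow> 0 < d \<Longrightarrow> (1 - 2*t) * d + (2*t - t*t) * d\<^sup>2 + (t*t) * d^3 < d"
proof -
  have factor: "(1 - 2*t) * d + (2*t - t*t) * d\<^sup>2 + (t*t) * d^3 = d - t * d * (2 - (2 - t) * d - t * d\<^sup>2)"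
    by (simp add: power2_eq_square power3_eq_cube algebra_simps)
  have "t * d\<^sup>2 \<le> t * d"
    using assms by (intro mult_left_mono) (simp_all add: power2_eq_square mult_left_le)
  then have pos: "0 < 2 - (2 - t) * d - t * d\<^sup>2"
    using assms by (simp add: algebra_simps)
  show "(1 - 2*t) * d + (2*t - t*t) * d\<^sup>2 + (t*t) * d^3 \<le> d"
    unfolding factor using assms pos by simp
  show "0 < t \<Longrightarrow> 0 < d \<Longrightarrow> (1 - 2*t) * d + (2*t - t*t) * d\<^sup>2 + (t*t) * d^3 < d"
    unfolding factor using pos by simp
qed

section \<open>Scalar estimates\<close>

lemma mu_condition_rescaled:
  fixes eps lam mu L s Lh :: real
  assumes eps: "0 < eps" "eps < 3/4" and lam: "lam > 0"
    and mu: "mu \<ge> 2 / (3 - 4*eps) * (L*(1-eps) + 3 * s + Lh\<^sup>2*(1+eps)\<^sup>2 / (lam*(1-eps)))"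
  shows "mu * (3/4 - eps) \<ge> L*(1-eps)/2 + 3/2 * s + Lh\<^sup>2*(1+eps)\<^sup>2 / (2*(1-eps)) / lam"
proof -
  define Q K where "Q = Lh\<^sup>2*(1+eps)\<^sup>2 / (lam*(1-eps))" and "K = Lh\<^sup>2*(1+eps)\<^sup>2 / (2*(1-eps)) / lam"
  have "L*(1-eps) + 3 * s + Q \<le> mu * (3 - 4*eps) / 2"
    using mu eps by (simp add: Q_def field_simps)
  moreover have "Q = 2 * K" using eps lam by (simp add: Q_def K_def field_simps)
  moreover have "mu * (3 - 4*eps) / 2 = 2 * (mu * (3/4 - eps))" by (simp add: field_simps)
  ultimately show ?thesis unfolding K_def[symmetric] by linarith
qed

lemma mu_condition_nonneg:
  fixes eps lam mu L s Lh :: real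
  assumes "0 < eps" "eps < 3/4" "lam > 0" "L > 0" "s \<ge> 0"
    and mu: "mu \<ge> 2 / (3 - 4*eps) * (L*(1-eps) + 3 * s + Lh\<^sup>2*(1+eps)\<^sup>2 / (lam*(1-eps)))"
  shows "mu \<ge> 0"
proof -
  have "0 \<le> 2 / (3 - 4*eps) * (L*(1-eps) + 3 * s + Lh\<^sup>2*(1+eps)\<^sup>2 / (lam*(1-eps)))"
    using assms by (intro mult_nonneg_nonneg add_nonneg_nonneg divide_nonneg_nonneg) simp_all
  then show ?thesis using mu by linarith
qed

lemma young_inequality:
  fixes u g a :: real
  assumes "a > 0"
  shows "u * g \<le> a * g\<^sup>2 + u\<^sup>2 / (4 * a)"
proof -
  have "0 \<le> (2 * a * g - u)\<^sup>2" by simp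
  then have "4 * a * (u * g) \<le> 4 * a * (a * g\<^sup>2 + u\<^sup>2 / (4 * a))"
    using assms by (simp add: power2_eq_square algebra_simps)
  then show ?thesis using assms by simp
qed

lemma cross_term_le:
  fixes L L' Lh g d w eps :: real
  assumes "0 \<le> d" "0 \<le> w" "0 < eps" "eps < 1" "0 \<le> L" "0 \<le> L'" "L \<le> Lh" "L' \<le> Lh"
    and w: "w\<^sup>2 \<le> (1+eps) * d\<^sup>2"
  shows "(L'*d + L*w)/2 * g \<le> (1-eps) / (2*(1+eps)) * g\<^sup>2 + Lh\<^sup>2*(1+eps)\<^sup>2 / (2*(1-eps)) * d\<^sup>2"
proof -
  define u a where "u = (L'*d + L*w)/2" and "a = (1-eps) / (2*(1+eps))"
  have a0: "a > 0" using assms by (simp add: a_def)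
  have "u \<le> Lh*(d+w)/2"
    unfolding u_def using assms
    by (intro divide_right_mono) (simp_all add: distrib_left mult_right_mono add_mono)
  then have "u\<^sup>2 \<le> (Lh*(d+w)/2)\<^sup>2"
    using assms by (intro power_mono) (simp_all add: u_def)
  also have "\<dots> = Lh\<^sup>2 * ((d+w)\<^sup>2/4)" by (simp add: power_mult_distrib power_divide)
  also have "(d+w)\<^sup>2/4 \<le> (1+eps)*d\<^sup>2"
  proof -
    have "(d+w)\<^sup>2 \<le> 2*(d\<^sup>2+w\<^sup>2)" using zero_le_power2[of "d-w"] by (simp add: power2_eq_square algebra_simps)
    then show ?thesis using w assms mult_right_mono[of 1 "1+eps" "d\<^sup>2"] by simp
  qed
  finally have u2: "u\<^sup>2 \<le> Lh\<^sup>2 * ((1+eps)*d\<^sup>2)" by (simp add: mult_left_mono)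
  have "u*g \<le> a*g\<^sup>2 + u\<^sup>2/(4*a)" by (rule young_inequality[OF a0])
  also have "u\<^sup>2/(4*a) \<le> Lh\<^sup>2 * ((1+eps)*d\<^sup>2)/(4*a)" using u2 a0 by (simp add: divide_right_mono)
  also have "\<dots> = Lh\<^sup>2*(1+eps)\<^sup>2 / (2*(1-eps)) * d\<^sup>2"
    using assms by (simp add: a_def field_simps power2_eq_square)
  finally show ?thesis by (simp add: u_def a_def)
qed

text \<open>Only \<open>(1-d) d\<^sup>2 \<le> w\<^sup>2 \<le> (1+d) d\<^sup>2\<close> is known, so the sign of \<open>mu - L/2\<close>
  decides which side is used.\<close>

lemma normal_term_ge:
  fixes mu L T d w eps :: real
  assumes "0 \<le> d" "d \<le> eps" "0 < eps" "eps < 3/4" "0 < L" "0 \<le> T"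
    and wl: "(1-d)*d\<^sup>2 \<le> w\<^sup>2" and wu: "w\<^sup>2 \<le> (1+eps)*d\<^sup>2"
    and mu: "mu*(3/4 - eps) \<ge> L*(1-eps)/2 + T"
  shows "(mu - L/2)*w\<^sup>2 \<ge> (mu/4 + T)*d\<^sup>2"
proof (cases "mu \<ge> L/2")
  case True
  have "(1-eps)*d\<^sup>2 \<le> (1-d)*d\<^sup>2" using assms by (intro mult_right_mono) simp_all
  then have "(mu - L/2)*w\<^sup>2 \<ge> (mu - L/2)*(1-eps)*d\<^sup>2"
    using True wl by (simp add: mult.assoc mult_left_mono)
  moreover have "(mu - L/2)*(1-eps) - (mu/4 + T) = mu*(3/4-eps) - (L*(1-eps)/2 + T)"
    by (simp add: algebra_simps)
  then have "(mu - L/2)*(1-eps) \<ge> mu/4 + T" using mu by linarith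
  ultimately show ?thesis by (meson mult_right_mono order_trans zero_le_power2)
next
  case False
  have "(mu - L/2)*w\<^sup>2 \<ge> (mu - L/2)*(1+eps)*d\<^sup>2"
    using False wu by (simp add: mult.assoc mult_left_mono_neg)
  moreover have "(mu - L/2)*(1+eps) \<ge> mu/4 + T"
  proof -
    define c where "c = (3/4+eps)/(3/4-eps)"
    have c1: "c \<ge> 1" using assms by (simp add: c_def field_simps)
    have "c*(1-eps) \<ge> 1+eps" using assms by (simp add: c_def field_simps)
    then have "(c*(1-eps))*(L/2) \<ge> (1+eps)*(L/2)" using assms by (intro mult_right_mono) simp_all
    then have A: "c * (L*(1-eps)/2) \<ge> L*(1+eps)/2" by (simp add: mult_ac)
    have B: "c * T \<ge> T" using mult_right_mono[OF c1 \<open>0 \<le> T\<close>] by simp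
    have "mu*(3/4+eps) = c * (mu*(3/4-eps))" using assms by (simp add: c_def field_simps)
    also have "\<dots> \<ge> c * (L*(1-eps)/2 + T)" using mult_left_mono[OF mu] c1 by simp
    finally have C: "mu*(3/4+eps) \<ge> c * (L*(1-eps)/2) + c * T" by (simp add: distrib_left)
    have "(mu - L/2)*(1+eps) - (mu/4 + T) = mu*(3/4+eps) - (L*(1+eps)/2 + T)"
      by (simp add: algebra_simps)
    then show ?thesis using A B C by linarith
  qed
  ultimately show ?thesis by (meson mult_right_mono order_trans zero_le_power2)
qed

text \<open>Here \<open>P\<close>, \<open>g\<close>, \<open>d\<close>, \<open>w\<close> stand for \<open>|skew(nabla f X^T)|^2\<close>, \<open>|grad f(X)|\<close>,
  \<open>|X^T X - I|\<close> and \<open>|X (X^T X - I)|\<close>; the left-hand side is the lower bound of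
  \<open>inner_egrad_Lagr_Lam_ge_cross_terms\<close>.\<close>

lemma landing_decrease_rate_ge:
  fixes P g d w L L' s lam mu eps :: real
  assumes P: "g\<^sup>2 \<le> (1+d)*P"
    and "0 \<le> d" "d \<le> eps" "0 \<le> w" "0 \<le> g"
    and wl: "(1-d)*d\<^sup>2 \<le> w\<^sup>2" and wu: "w\<^sup>2 \<le> (1+d)*d\<^sup>2"
    and "L > 0" "L' \<ge> 0" "s \<ge> 0" "lam > 0" "0 < eps" "eps < 3/4"
    and mu: "mu \<ge> 2/(3-4*eps)*(L*(1-eps) + 3 * s + (max L L')\<^sup>2*(1+eps)\<^sup>2/(lam*(1-eps)))"
  shows "P - 1/2*L'*g*d - 1/2*L*(g + lam*w)*w - 3/2*lam * s * d\<^sup>2 + lam*mu*w\<^sup>2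
           \<ge> g\<^sup>2/2 + lam*mu*d\<^sup>2/4"
proof -
  define K where "K = (max L L')\<^sup>2*(1+eps)\<^sup>2 / (2*(1-eps))"
  define T where "T = 3/2 * s + K/lam"
  have "K \<ge> 0" using assms by (simp add: K_def)
  then have T0: "T \<ge> 0" using assms by (simp add: T_def)
  have w2e: "w\<^sup>2 \<le> (1+eps)*d\<^sup>2" using wu assms mult_right_mono[of "1+d" "1+eps" "d\<^sup>2"] by simp
  have cross: "(L'*d + L*w)/2 * g \<le> (1-eps)/(2*(1+eps)) * g\<^sup>2 + K*d\<^sup>2"
    unfolding K_def using assms w2e by (intro cross_term_le) simp_all
  have "0 \<le> (1+d)*P" using P zero_le_power2[of g] by linarith
  then have "0 \<le> P" using assms by (simp add: zero_le_mult_iff)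
  then have "g\<^sup>2 \<le> (1+eps)*P"
    using P assms mult_right_mono[of "1+d" "1+eps" P] by linarith
  then have "P - (1-eps)/(2*(1+eps)) * g\<^sup>2 \<ge> g\<^sup>2/2"
    using assms by (simp add: field_simps)
  moreover have "(mu - L/2)*w\<^sup>2 \<ge> (mu/4 + T)*d\<^sup>2"
    by (rule normal_term_ge[where eps=eps])
      (use assms T0 w2e mu_condition_rescaled[OF _ _ _ mu] in \<open>simp_all add: T_def K_def\<close>)
  then have "lam*((mu - L/2)*w\<^sup>2) \<ge> lam*((mu/4 + T)*d\<^sup>2)"
    using assms by (simp add: mult_left_mono)
  moreover have "lam*((mu/4 + T)*d\<^sup>2) = lam*mu*d\<^sup>2/4 + 3/2*lam * s * d\<^sup>2 + K*d\<^sup>2"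
    using assms by (simp add: T_def algebra_simps)
  moreover have "P - 1/2*L'*g*d - 1/2*L*(g + lam*w)*w - 3/2*lam * s * d\<^sup>2 + lam*mu*w\<^sup>2
      = P - (L'*d + L*w)/2 * g + lam*((mu - L/2)*w\<^sup>2) - 3/2*lam * s * d\<^sup>2"
    by (simp add: field_simps power2_eq_square)
  ultimately show ?thesis using cross by linarith
qed

lemma second_order_term_le:
  fixes Lg eta lam mu eps g d w :: real
  assumes "Lg > 0" "eta > 0" "lam > 0" "eps > 0" "mu \<ge> 0"
    and eta1: "eta \<le> 1/(2*Lg)" and eta2: "eta \<le> lam*mu/(4*lam\<^sup>2*Lg*(1+eps))"
    and w: "w\<^sup>2 \<le> (1+eps)*d\<^sup>2"
  shows "Lg*eta/2*(g\<^sup>2 + lam\<^sup>2*w\<^sup>2) \<le> g\<^sup>2/4 + lam*mu*d\<^sup>2/8"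
proof -
  have "Lg*eta \<le> 1/2" using eta1 assms by (simp add: field_simps)
  then have gradient_part: "Lg*eta/2*g\<^sup>2 \<le> g\<^sup>2/4"
    using mult_right_mono[of "Lg*eta" "1/2" "g\<^sup>2"] by simp
  have "0 < 4*lam\<^sup>2*Lg*(1+eps)" using assms by simp
  then have "eta * (4*lam\<^sup>2*Lg*(1+eps)) \<le> lam*mu"
    using eta2 by (simp only: pos_le_divide_eq)
  then have "(Lg*eta*lam\<^sup>2*4) * (1+eps) * w\<^sup>2 \<le> lam*mu * w\<^sup>2"
    by (intro mult_right_mono) (simp_all only: mult_ac zero_le_power2)
  also have "\<dots> \<le> lam*mu * ((1+eps)*d\<^sup>2)" using w assms by (intro mult_left_mono) simp_all
  finally have "(Lg*eta*lam\<^sup>2*4*w\<^sup>2) * (1+eps) \<le> (lam*mu*d\<^sup>2) * (1+eps)"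
    by (simp only: mult_ac)
  then have "Lg*eta*lam\<^sup>2*4*w\<^sup>2 \<le> lam*mu*d\<^sup>2" using assms by simp
  then have "Lg*eta/2*(lam\<^sup>2*w\<^sup>2) \<le> lam*mu*d\<^sup>2/8" by simp
  then show ?thesis using gradient_part by (simp add: distrib_left)
qed

section \<open>The safeguard\<close>

lemma safeguard_quadratic_le:
  fixes a b r C tau :: real
  assumes "0 \<le> tau" "a > 0" "a\<^sup>2 \<le> C" "0 \<le> r" and step: "C * tau \<le> b + a * r"
  shows "C * tau\<^sup>2 - 2 * tau * b \<le> r\<^sup>2"
proof -
  have C: "C > 0" using assms zero_less_power[of a 2] by linarith
  have "C * tau\<^sup>2 = (C * tau) * tau" by (simp add: power2_eq_square)
  also have "\<dots> \<le> (b + a * r) * tau" by (rule mult_right_mono[OF step \<open>0 \<le> tau\<close>])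
  finally have le: "C * tau\<^sup>2 - 2 * tau * b \<le> tau * (a * r - b)" by (simp add: algebra_simps)
  show ?thesis
  proof (cases "a * r \<le> b")
    case True
    then have "tau * (a * r - b) \<le> 0" using assms by (simp add: mult_nonneg_nonpos)
    then show ?thesis using le zero_le_power2[of r] by linarith
  next
    case False
    have "tau \<le> (b + a * r) / C" using step C by (simp add: pos_le_divide_eq mult.commute)
    then have "tau * (a * r - b) \<le> (b + a * r) / C * (a * r - b)"
      using False by (intro mult_right_mono) simp_all
    also have "\<dots> = ((a * r)\<^sup>2 - b\<^sup>2) / C" by (simp add: power2_eq_square algebra_simps)
    also have "\<dots> \<le> (a * r)\<^sup>2 / C" using C by (simp add: divide_right_mono)
    also have "\<dots> \<le> (a * r)\<^sup>2 / a\<^sup>2" using C assms by (intro divide_left_mono) simp_all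
    also have "\<dots> = r\<^sup>2" using assms by (simp add: power_mult_distrib)
    finally show ?thesis using le by linarith
  qed
qed

lemma safeguard_zero_defect_le:
  fixes a lam eps tau g :: real
  assumes "a > 0" "lam > 0" "0 < eps" "eps < 1" "0 \<le> tau" "tau * lam \<le> 1/2" "0 \<le> g" "g \<le> a"
    and step: "tau \<le> lam*(1-eps)*eps / (a\<^sup>2 + lam\<^sup>2*(1+eps)*eps\<^sup>2)"
  shows "tau\<^sup>2 * g\<^sup>2 \<le> eps"
proof -
  have "tau * (a\<^sup>2 + lam\<^sup>2*(1+eps)*eps\<^sup>2) \<le> lam*(1-eps)*eps"
    using step assms by (simp add: pos_le_divide_eq add_pos_nonneg)
  moreover have "tau * a\<^sup>2 \<le> tau * (a\<^sup>2 + lam\<^sup>2*(1+eps)*eps\<^sup>2)"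
    using assms by (intro mult_left_mono) simp_all
  ultimately have "tau * a\<^sup>2 \<le> lam*(1-eps)*eps" by linarith
  then have "tau * (tau * a\<^sup>2) \<le> tau * (lam*(1-eps)*eps)" using \<open>0 \<le> tau\<close> by (rule mult_left_mono)
  also have "\<dots> = (tau*lam) * ((1-eps)*eps)" by (simp add: mult_ac)
  also have "\<dots> \<le> (1/2) * ((1-eps)*eps)" using assms by (intro mult_right_mono) simp_all
  also have "\<dots> \<le> (1/2) * eps" using assms mult_right_mono[of "1-eps" 1 eps] by simp
  also have "\<dots> \<le> eps" using assms by simp
  finally have "tau\<^sup>2 * a\<^sup>2 \<le> eps" by (simp add: power2_eq_square mult_ac)
  moreover have "tau\<^sup>2 * g\<^sup>2 \<le> tau\<^sup>2 * a\<^sup>2" using assms by (intro mult_left_mono power_mono) simp_all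
  ultimately show ?thesis by simp
qed

text \<open>The left-hand side is the bound of \<open>norm_orth_defect_landing_step_le\<close> at defect \<open>d\<close>.
  It is controlled by the term of the safeguard infimum with \<open>(a, d) = (atil, d)\<close>, or with
  \<open>(a, d) = (atil, eps)\<close> when \<open>d = 0\<close>.\<close>

lemma safeguard_le:
  fixes a lam eps d tau g :: real
  assumes "a > 0" "lam > 0" "0 < eps" "eps < 1" "0 \<le> d" "d \<le> eps" "0 \<le> tau" "tau * lam \<le> 1/2"
    and "0 \<le> g" "g \<le> a"
    and step_d: "0 < d \<Longrightarrow> tau \<le> (lam*(1-eps)*d + a * sqrt ((eps-d)/2)) / (a\<^sup>2 + lam\<^sup>2*(1+eps)*d\<^sup>2)"
    and step_eps: "tau \<le> lam*(1-eps)*eps / (a\<^sup>2 + lam\<^sup>2*(1+eps)*eps\<^sup>2)"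
  shows "(1 - 2*(tau*lam)) * d + 2*(tau*lam) * d\<^sup>2 + tau\<^sup>2 * (g\<^sup>2 + lam\<^sup>2 * ((1 + d) * d\<^sup>2)) \<le> eps"
proof (cases "d = 0")
  case True
  then show ?thesis using safeguard_zero_defect_le[OF assms(1-4,7-10) step_eps] by simp
next
  case False
  define C b r where "C = a\<^sup>2 + lam\<^sup>2*(1+eps)*d\<^sup>2" and "b = lam*(1-eps)*d" and "r = sqrt ((eps-d)/2)"
  have C: "a\<^sup>2 \<le> C" "C > 0" using assms by (simp_all add: C_def add_pos_nonneg)
  have r2: "r\<^sup>2 = (eps - d)/2" using assms by (simp add: r_def)
  have "C * tau \<le> b + a * r"
    using step_d False assms C by (simp add: C_def b_def r_def pos_le_divide_eq mult.commute)
  then have quadratic: "C * tau\<^sup>2 - 2 * tau * b \<le> r\<^sup>2"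
    using assms C by (intro safeguard_quadratic_le) (simp_all add: r_def)
  have "(1 - 2*(tau*lam)) * d + 2*(tau*lam) * d\<^sup>2 = d - 2*(tau*lam)*d*(1-d)"
    by (simp add: power2_eq_square algebra_simps)
  also have "\<dots> \<le> d - 2*tau*b"
  proof -
    have "(tau*lam*d)*(1-eps) \<le> (tau*lam*d)*(1-d)" using assms by (intro mult_left_mono) simp_all
    moreover have "2*tau*b = 2*((tau*lam*d)*(1-eps))" by (simp add: b_def mult_ac)
    moreover have "2*(tau*lam)*d*(1-d) = 2*((tau*lam*d)*(1-d))" by (simp add: mult_ac)
    ultimately show ?thesis by linarith
  qed
  finally have first_order: "(1 - 2*(tau*lam)) * d + 2*(tau*lam) * d\<^sup>2 \<le> d - 2*tau*b" .
  have "g\<^sup>2 + lam\<^sup>2 * ((1 + d) * d\<^sup>2) \<le> C"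
    using assms unfolding C_def
    by (intro add_mono power_mono) (simp_all add: mult_left_mono mult_right_mono mult.assoc)
  then have "(g\<^sup>2 + lam\<^sup>2 * ((1 + d) * d\<^sup>2)) * tau\<^sup>2 \<le> C * tau\<^sup>2"
    by (rule mult_right_mono) simp
  then have "(1 - 2*(tau*lam)) * d + 2*(tau*lam) * d\<^sup>2 + tau\<^sup>2 * (g\<^sup>2 + lam\<^sup>2 * ((1 + d) * d\<^sup>2))
      \<le> d + (C * tau\<^sup>2 - 2 * tau * b)"
    using first_order by (simp add: mult.commute)
  also have "\<dots> \<le> d + r\<^sup>2" using quadratic by simp
  also have "\<dots> \<le> eps" using r2 \<open>d \<le> eps\<close> by simp
  finally show ?thesis .
qed

lemma eta_star_le_half_inverse: "eta_star atil eps lam \<le> 1/(2*lam)"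
  unfolding eta_star_def Let_def by auto

lemma eta_star_le:
  assumes "lam > 0" "eps < 1" "atil > 0" "0 < d" "d \<le> eps"
  shows "eta_star atil eps lam
           \<le> (lam*(1-eps)*d + atil * sqrt ((eps-d)/2)) / (atil\<^sup>2 + lam\<^sup>2*(1+eps)*d\<^sup>2)"
proof -
  define S where "S = {(lam * (1 - eps) * d + a * sqrt ((eps - d) / 2)) / (a\<^sup>2 + lam\<^sup>2 * (1 + eps) * d\<^sup>2)
               | a d. 0 < a \<and> a \<le> atil \<and> 0 < d \<and> d \<le> eps}"
  have mem: "(lam*(1-eps)*d + atil * sqrt ((eps-d)/2)) / (atil\<^sup>2 + lam\<^sup>2*(1+eps)*d\<^sup>2) \<in> S"
    unfolding S_def using assms by blast
  have "bdd_below S"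
  proof (rule bdd_belowI[of _ 0])
    fix x assume "x \<in> S"
    then show "0 \<le> x" unfolding S_def using assms by auto
  qed
  then have "Inf S \<le> (lam*(1-eps)*d + atil * sqrt ((eps-d)/2)) / (atil\<^sup>2 + lam\<^sup>2*(1+eps)*d\<^sup>2)"
    using mem by (rule cInf_lower[rotated])
  moreover have "eta_star atil eps lam = min (Inf S) (1/(2*lam))"
    unfolding eta_star_def Let_def S_def[symmetric] using mem by auto
  ultimately show ?thesis by linarith
qed

lemma landing_step_in_Stiefel_eps:
  fixes Y :: "real^'p^'n"
  assumes Y: "Y \<in> Stiefel_eps eps" and lam: "lam > 0" and eps: "0 < eps" "eps < 1"
    and tangent: "norm (mskew M ** Y) \<le> atil"
    and tau: "0 \<le> tau" "tau \<le> eta_star atil eps lam"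
  shows "Y - tau *\<^sub>R landing M lam Y \<in> Stiefel_eps eps"
proof -
  let ?d = "norm (orth_defect Y)"
  have d: "?d \<le> eps" using Y by (simp add: Stiefel_eps_iff)
  have "tau \<le> 1/(2*lam)" using tau(2) eta_star_le_half_inverse by (rule order_trans)
  then have tl: "tau * lam \<le> 1/2" using lam by (simp add: field_simps)
  show ?thesis
  proof (cases "atil \<le> 0")
    case True
    then have "norm (mskew M ** Y) \<le> 0" using tangent by linarith
    then have "mskew M ** Y = 0" by simp
    then have "norm (orth_defect (Y - tau *\<^sub>R landing M lam Y))
        \<le> (1 - 2*(tau*lam)) * ?d + (2*(tau*lam) - (tau*lam)*(tau*lam)) * ?d\<^sup>2 + ((tau*lam)*(tau*lam)) * ?d^3"
      using tau tl lam by (intro norm_orth_defect_normal_step_le) simp_all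
    also have "\<dots> \<le> ?d" using tau lam tl d eps by (intro normal_step_polynomial_le(1)) simp_all
    finally show ?thesis using d by (simp add: Stiefel_eps_iff)
  next
    case False
    have "norm (orth_defect (Y - tau *\<^sub>R landing M lam Y))
       \<le> (1 - 2*(tau*lam)) * ?d + 2*(tau*lam) * ?d\<^sup>2
          + tau\<^sup>2 * ((norm (mskew M ** Y))\<^sup>2 + lam\<^sup>2 * ((1 + ?d) * ?d\<^sup>2))"
      using tau(1) tl lam by (rule norm_orth_defect_landing_step_le)
    also have "\<dots> \<le> eps"
      using False lam eps d tau tl tangent
        eta_star_le[of lam eps atil ?d] eta_star_le[of lam eps atil eps]
      by (intro safeguard_le[where a=atil]) auto
    finally show ?thesis by (simp add: Stiefel_eps_iff)
  qed
qed

section \<open>Lipschitz gradients on the tube\<close>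

lemma descent_lemma_segment:
  fixes F :: "'a::real_inner \<Rightarrow> real"
  assumes deriv: "\<And>Y. (F has_derivative (\<lambda>H. G Y \<bullet> H)) (at Y)"
    and segment: "\<And>tau. 0 \<le> tau \<Longrightarrow> tau \<le> eta \<Longrightarrow> X - tau *\<^sub>R V \<in> S"
    and Lipschitz: "\<forall>Y\<in>S. \<forall>Z\<in>S. norm (G Y - G Z) \<le> Lg * norm (Y - Z)"
    and "0 \<le> eta"
  shows "F (X - eta *\<^sub>R V) \<le> F X - eta * (G X \<bullet> V) + Lg/2 * eta\<^sup>2 * (norm V)\<^sup>2"
proof -
  define phi where "phi = (\<lambda>tau. F (X - tau *\<^sub>R V) + tau * (G X \<bullet> V) - Lg/2 * tau\<^sup>2 * (norm V)\<^sup>2)"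
  have "phi eta \<le> phi 0"
  proof (rule DERIV_nonpos_imp_nonincreasing[OF \<open>0 \<le> eta\<close>])
    fix tau assume tau: "0 \<le> tau" "tau \<le> eta"
    define y where "y = (G X - G (X - tau *\<^sub>R V)) \<bullet> V - Lg * tau * (norm V)\<^sup>2"
    have "((\<lambda>tau. F (X - tau *\<^sub>R V)) has_derivative (\<lambda>h. G (X - tau *\<^sub>R V) \<bullet> (- (h *\<^sub>R V)))) (at tau)"
      by (rule has_derivative_compose[OF _ deriv]) (auto intro!: derivative_eq_intros)
    then have "(phi has_derivative (\<lambda>h. y * h)) (at tau)"
      unfolding phi_def
      by (auto intro!: derivative_eq_intros simp: y_def power2_eq_square algebra_simps inner_diff_left)
    then have "DERIV phi tau :> y" by (simp add: has_field_derivative_def)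
    moreover have "y \<le> 0"
    proof -
      have "(G X - G (X - tau *\<^sub>R V)) \<bullet> V \<le> norm (G X - G (X - tau *\<^sub>R V)) * norm V"
        by (rule norm_cauchy_schwarz)
      also have "norm (G X - G (X - tau *\<^sub>R V)) \<le> Lg * (tau * norm V)"
        using Lipschitz segment[OF order_refl \<open>0 \<le> eta\<close>] segment[OF tau] tau by fastforce
      finally show ?thesis by (simp add: y_def power2_eq_square mult_right_mono mult_ac)
    qed
    ultimately show "\<exists>y. DERIV phi tau :> y \<and> y \<le> 0" by blast
  qed
  then show ?thesis by (simp add: phi_def)
qed

lemma has_derivative_difference_quotient_at_right:
  fixes G :: "'a::real_normed_vector \<Rightarrow> 'b::real_normed_vector"
  assumes deriv: "(G has_derivative G') (at Y)"
  shows "((\<lambda>t. (G (Y + t *\<^sub>R H) - G Y) /\<^sub>R t) \<longlongrightarrow> G' H) (at_right 0)"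
proof -
  have lin: "linear G'" using deriv by (simp add: has_derivative_def bounded_linear.linear)
  have "((\<lambda>t::real. Y + t *\<^sub>R H) has_derivative (\<lambda>t. t *\<^sub>R H)) (at 0 within {0<..})"
    by (auto intro!: derivative_eq_intros)
  moreover have "(G has_derivative G') (at (Y + 0 *\<^sub>R H))" using deriv by simp
  ultimately have "((\<lambda>t. G (Y + t *\<^sub>R H)) has_derivative (\<lambda>t. G' (t *\<^sub>R H))) (at 0 within {0<..})"
    by (rule has_derivative_compose)
  then have "((\<lambda>t. (G (Y + t *\<^sub>R H) - G Y - G' (t *\<^sub>R H)) /\<^sub>R norm t) \<longlongrightarrow> 0) (at_right 0)"
    by (simp add: has_derivative_at_within)
  moreover have "\<forall>\<^sub>F t in at_right 0. (G (Y + t *\<^sub>R H) - G Y - G' (t *\<^sub>R H)) /\<^sub>R norm t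
                     = (G (Y + t *\<^sub>R H) - G Y) /\<^sub>R t - G' H"
    using eventually_at_right_less[of "0::real"]
    by eventually_elim (simp add: linear_scale[OF lin] scaleR_diff_right)
  ultimately have "((\<lambda>t. (G (Y + t *\<^sub>R H) - G Y) /\<^sub>R t - G' H) \<longlongrightarrow> 0) (at_right 0)"
    by (rule Lim_transform_eventually)
  then show ?thesis by (simp add: LIM_zero_iff)
qed

lemma norm_derivative_le_Lipschitz_interior:
  fixes G :: "'a::real_normed_vector \<Rightarrow> 'b::real_normed_vector"
  assumes deriv: "(G has_derivative G') (at Y)" and Y: "Y \<in> interior S"
    and Lipschitz: "\<forall>A\<in>S. \<forall>B\<in>S. norm (G A - G B) \<le> L * norm (A - B)"
  shows "norm (G' H) \<le> L * norm H"
proof -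
  have "((\<lambda>t. norm ((G (Y + t *\<^sub>R H) - G Y) /\<^sub>R t)) \<longlongrightarrow> norm (G' H)) (at_right 0)"
    by (intro tendsto_norm has_derivative_difference_quotient_at_right[OF deriv])
  moreover have "((\<lambda>t::real. Y + t *\<^sub>R H) \<longlongrightarrow> Y) (at_right 0)"
    by (auto intro!: tendsto_eq_intros)
  then have "\<forall>\<^sub>F t in at_right 0. Y + t *\<^sub>R H \<in> interior S"
    by (rule topological_tendstoD[OF _ open_interior Y])
  then have "\<forall>\<^sub>F t in at_right 0. norm ((G (Y + t *\<^sub>R H) - G Y) /\<^sub>R t) \<le> L * norm H"
    using eventually_at_right_less[of "0::real"]
  proof eventually_elim
    case (elim t)
    then have "Y + t *\<^sub>R H \<in> S" "Y \<in> S" using Y interior_subset by blast+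
    then have "norm (G (Y + t *\<^sub>R H) - G Y) \<le> L * norm ((Y + t *\<^sub>R H) - Y)"
      using Lipschitz by blast
    then have "norm (G (Y + t *\<^sub>R H) - G Y) / t \<le> L * norm H"
      using elim by (simp add: pos_divide_le_eq mult_ac)
    then show ?case using elim by (simp add: divide_inverse_commute)
  qed
  ultimately show ?thesis by (rule tendsto_upperbound) simp
qed

lemma continuous_orth_defect: "continuous_on S (orth_defect :: real^'p^'n \<Rightarrow> real^'p^'p)"
  by (meson has_derivative_orth_defect continuous_at_imp_continuous_on has_derivative_continuous)

lemma open_orth_defect_less: "open {X::real^'p^'n. norm (orth_defect X) < eps}"
  by (intro open_Collect_less continuous_intros continuous_orth_defect)

text \<open>Boundary points are reached from inside along the normal part of the landing flow.\<close>

lemma Stiefel_eps_subset_closure_interior: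
  assumes "0 < eps" "eps < 1"
  shows "Stiefel_eps eps \<subseteq> closure (interior (Stiefel_eps eps :: (real^'p^'n) set))"
proof
  fix X :: "real^'p^'n" assume X: "X \<in> Stiefel_eps eps"
  let ?Xt = "\<lambda>t. X - t *\<^sub>R landing 0 1 X"
  have inner: "{Y::real^'p^'n. norm (orth_defect Y) < eps} \<subseteq> interior (Stiefel_eps eps)"
    by (intro interior_maximal open_orth_defect_less) (auto simp: Stiefel_eps_iff)
  show "X \<in> closure (interior (Stiefel_eps eps))"
  proof (cases "norm (orth_defect X) < eps")
    case True
    then show ?thesis using inner closure_subset by blast
  next
    case False
    then have d: "norm (orth_defect X) = eps" using X by (simp add: Stiefel_eps_iff)
    have tangent: "mskew (0::real^'n^'n) ** X = 0" by (simp add: mskew_def transpose_zero)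
    have "\<forall>\<^sub>F t in at_right 0. t < (1/2::real)"
      unfolding eventually_at_right_field by (rule exI[of _ "1/2"]) auto
    then have "\<forall>\<^sub>F t in at_right 0. ?Xt t \<in> closure (interior (Stiefel_eps eps))"
      using eventually_at_right_less[of "0::real"]
    proof eventually_elim
      case (elim t)
      then have "norm (orth_defect (?Xt t))
          \<le> (1 - 2*t) * eps + (2*t - t*t) * eps\<^sup>2 + (t*t) * eps^3"
        using norm_orth_defect_normal_step_le[OF tangent, of t 1] d by simp
      also have "\<dots> < eps" using elim assms by (intro normal_step_polynomial_le(2)) simp_all
      finally show ?case using inner closure_subset by blast
    qed
    then show ?thesis
      by (rule Lim_in_closed_set[OF closed_closure]) (auto intro!: tendsto_eq_intros)
  qed
qed

lemma norm_derivative_le_Lipschitz_Stiefel_eps: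
  fixes G :: "real^'p^'n \<Rightarrow> real^'p^'n"
  assumes deriv: "\<And>Y. (G has_derivative G' Y) (at Y)"
    and cont: "continuous_on UNIV (\<lambda>Y. G' Y H)"
    and Lipschitz: "\<forall>A\<in>Stiefel_eps eps. \<forall>B\<in>Stiefel_eps eps. norm (G A - G B) \<le> L * norm (A - B)"
    and "0 < eps" "eps < 1" and X: "X \<in> Stiefel_eps eps"
  shows "norm (G' X H) \<le> L * norm H"
proof -
  have "interior (Stiefel_eps eps) \<subseteq> {Y. norm (G' Y H) \<le> L * norm H}"
    using norm_derivative_le_Lipschitz_interior[OF deriv _ Lipschitz] by blast
  moreover have "closed {Y. norm (G' Y H) \<le> L * norm H}"
    by (intro closed_Collect_le continuous_intros cont)
  ultimately have "closure (interior (Stiefel_eps eps)) \<subseteq> {Y. norm (G' Y H) \<le> L * norm H}"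
    by (rule closure_minimal)
  then show ?thesis using Stiefel_eps_subset_closure_interior[OF \<open>0 < eps\<close> \<open>eps < 1\<close>] X by blast
qed

lemma bounded_Stiefel_eps: "bounded (Stiefel_eps eps :: (real^'p^'n) set)"
  unfolding bounded_iff
proof (intro exI ballI)
  fix X :: "real^'p^'n" assume "X \<in> Stiefel_eps eps"
  then have d: "norm (orth_defect X) \<le> eps" by (simp add: Stiefel_eps_iff)
  let ?I = "mat 1 :: real^'p^'p"
  have "(norm X)\<^sup>2 = ?I \<bullet> (transpose X ** X)"
    using inner_matrix_mult_left[of X ?I X] by (simp add: power2_norm_eq_inner)
  also have "\<dots> \<le> norm ?I * norm (orth_defect X + ?I)"
    unfolding transpose_mult_self by (rule norm_cauchy_schwarz)
  also have "\<dots> \<le> norm ?I * (eps + norm ?I)"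
    using d norm_triangle_ineq[of "orth_defect X" ?I] by (intro mult_left_mono) simp_all
  finally have "(norm X)\<^sup>2 \<le> norm ?I * (eps + norm ?I)" .
  moreover have "norm X \<le> 1 + (norm X)\<^sup>2"
  proof -
    have "0 \<le> (norm X)\<^sup>2 + 1 - 2 * norm X"
      using zero_le_power2[of "norm X - 1"] by (simp add: power2_diff)
    then show ?thesis using norm_ge_zero[of X] by linarith
  qed
  ultimately show "norm X \<le> 1 + norm ?I * (eps + norm ?I)" by linarith
qed

lemma compact_Stiefel_eps: "compact (Stiefel_eps eps :: (real^'p^'n) set)"
proof -
  have "closed {X::real^'p^'n. norm (orth_defect X) \<le> eps}"
    by (intro closed_Collect_le continuous_intros continuous_orth_defect)
  moreover have "Stiefel_eps eps = {X::real^'p^'n. norm (orth_defect X) \<le> eps}"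
    by (auto simp: Stiefel_eps_iff)
  ultimately have "closed (Stiefel_eps eps :: (real^'p^'n) set)" by simp
  then show ?thesis using bounded_Stiefel_eps compact_eq_bounded_closed by blast
qed

lemma norm_le_Sup_compact:
  fixes g :: "'a::metric_space \<Rightarrow> 'b::real_normed_vector"
  assumes "compact K" "continuous_on K g" "x \<in> K"
  shows "norm (g x) \<le> Sup {norm (g X) | X. X \<in> K}"
proof -
  have "compact ((\<lambda>X. norm (g X)) ` K)"
    using assms by (intro compact_continuous_image continuous_intros) auto
  then have "bdd_above ((\<lambda>X. norm (g X)) ` K)" by (intro bounded_imp_bdd_above compact_imp_bounded)
  moreover have "{norm (g X) | X. X \<in> K} = (\<lambda>X. norm (g X)) ` K" by auto
  ultimately show ?thesis using assms(3) by (auto intro: cSup_upper)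
qed

lemma norm_le_Sup_compact_family:
  fixes g :: "'i \<Rightarrow> 'a::metric_space \<Rightarrow> 'b::real_normed_vector"
  assumes "compact K" "finite I" "\<And>i. i \<in> I \<Longrightarrow> continuous_on K (g i)" "x \<in> K" "j \<in> I"
  shows "norm (g j x) \<le> Sup {norm (g i X) | X i. X \<in> K \<and> i \<in> I}"
proof -
  have "\<And>i. i \<in> I \<Longrightarrow> compact ((\<lambda>X. norm (g i X)) ` K)"
    using assms by (intro compact_continuous_image continuous_intros) auto
  then have "bdd_above (\<Union>i\<in>I. (\<lambda>X. norm (g i X)) ` K)"
    using assms(2) by (intro bounded_imp_bdd_above bounded_UN compact_imp_bounded) auto
  moreover have "{norm (g i X) | X i. X \<in> K \<and> i \<in> I} = (\<Union>i\<in>I. (\<lambda>X. norm (g i X)) ` K)" by auto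
  ultimately show ?thesis using assms(4,5) by (auto intro: cSup_upper)
qed

section \<open>Averages of \<open>C2\<close> functions\<close>

lemma C2_const: "C2 (\<lambda>x. c)"
  unfolding C2_def
proof (intro exI conjI allI)
  show "((\<lambda>x. c) has_derivative (\<lambda>h. 0 \<bullet> h)) (at x)" for x
    using has_derivative_const[of c] by simp
  show "((\<lambda>x. 0) has_derivative blinfun_apply 0) (at x)" for x
    using has_derivative_const[of 0] by (simp add: zero_blinfun.rep_eq)
qed (rule continuous_on_const)

lemma C2_add:
  assumes "C2 g" "C2 h"
  shows "C2 (\<lambda>x. g x + h x)"
proof -
  obtain G G' H H' where
    G: "\<And>x. (g has_derivative (\<lambda>v. G x \<bullet> v)) (at x)" "\<And>x. (G has_derivative blinfun_apply (G' x)) (at x)"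
      "continuous_on UNIV G'"
    and H: "\<And>x. (h has_derivative (\<lambda>v. H x \<bullet> v)) (at x)" "\<And>x. (H has_derivative blinfun_apply (H' x)) (at x)"
      "continuous_on UNIV H'"
    using assms unfolding C2_def by metis
  show ?thesis unfolding C2_def
  proof (intro exI conjI allI)
    fix x
    show "((\<lambda>x. g x + h x) has_derivative (\<lambda>v. (G x + H x) \<bullet> v)) (at x)"
      using has_derivative_add[OF G(1) H(1)] by (simp add: inner_add_left)
    show "((\<lambda>x. G x + H x) has_derivative blinfun_apply (G' x + H' x)) (at x)"
      using has_derivative_add[OF G(2) H(2)] by (simp add: plus_blinfun.rep_eq)
  qed (intro continuous_on_add G(3) H(3))
qed

lemma C2_cmult:
  assumes "C2 g"
  shows "C2 (\<lambda>x. c * g x)"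
proof -
  obtain G G' where
    G: "\<And>x. (g has_derivative (\<lambda>v. G x \<bullet> v)) (at x)" "\<And>x. (G has_derivative blinfun_apply (G' x)) (at x)"
      "continuous_on UNIV G'"
    using assms unfolding C2_def by metis
  show ?thesis unfolding C2_def
  proof (intro exI conjI allI)
    fix x
    show "((\<lambda>x. c * g x) has_derivative (\<lambda>v. (c *\<^sub>R G x) \<bullet> v)) (at x)"
      using has_derivative_mult_right[OF G(1), of c] by simp
    show "((\<lambda>x. c *\<^sub>R G x) has_derivative blinfun_apply (c *\<^sub>R G' x)) (at x)"
      using has_derivative_scaleR_right[OF G(2), of c] by (simp add: scaleR_blinfun.rep_eq)
  qed (intro continuous_on_scaleR continuous_on_const G(3))
qed

lemma C2_sum:
  assumes "finite I" "\<And>i. i \<in> I \<Longrightarrow> C2 (g i)"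
  shows "C2 (\<lambda>x. \<Sum>i\<in>I. g i x)"
  using assms by (induction I rule: finite_induct) (simp_all add: C2_const C2_add)

lemma C2_has_derivative_egrad:
  assumes "C2 g"
  shows "(g has_derivative (\<lambda>h. egrad g x \<bullet> h)) (at x)"
proof -
  obtain G where "\<And>x. (g has_derivative (\<lambda>h. G x \<bullet> h)) (at x)"
    using assms unfolding C2_def by metis
  then show ?thesis using egrad_eqI by metis
qed

lemma C2_hessian:
  assumes "C2 g"
  obtains Hg where "\<And>x. (egrad g has_derivative Hg x) (at x)"
    and "\<And>h. continuous_on UNIV (\<lambda>x. Hg x h)"
proof -
  obtain G G' where G: "\<And>x. (g has_derivative (\<lambda>h. G x \<bullet> h)) (at x)"
    and G': "\<And>x. (G has_derivative blinfun_apply (G' x)) (at x)" "continuous_on UNIV G'"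
    using assms unfolding C2_def by metis
  have "egrad g = G" using egrad_eqI[OF G] by auto
  moreover have "continuous_on UNIV (\<lambda>x. blinfun_apply (G' x) h)" for h
    by (intro continuous_intros G'(2))
  ultimately show ?thesis using that G'(1) by metis
qed

lemma C2_continuous_egrad:
  assumes "C2 g"
  shows "continuous_on S (egrad g)"
proof -
  obtain Hg where "\<And>x. (egrad g has_derivative Hg x) (at x)" using C2_hessian[OF assms] by metis
  then show ?thesis by (meson continuous_at_imp_continuous_on has_derivative_continuous)
qed

lemma C2_continuous_rgrad:
  fixes g :: "real^'p^'n \<Rightarrow> real"
  assumes "C2 g"
  shows "continuous_on S (rgrad g)"
  unfolding rgrad_def[abs_def]
  by (intro bounded_linear.continuous_on[OF bounded_linear_mskew]
      bounded_bilinear.continuous_on[OF bounded_bilinear_matrix_mult]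
      bounded_linear.continuous_on[OF bounded_linear_transpose] continuous_on_id
      C2_continuous_egrad[OF assms])

lemma egrad_scaled_sum:
  assumes "finite I" "\<And>i. i \<in> I \<Longrightarrow> C2 (g i)"
  shows "egrad (\<lambda>x. c * (\<Sum>i\<in>I. g i x)) x = c *\<^sub>R (\<Sum>i\<in>I. egrad (g i) x)"
proof (rule egrad_eqI)
  have "((\<lambda>x. c * (\<Sum>i\<in>I. g i x)) has_derivative (\<lambda>h. c * (\<Sum>i\<in>I. egrad (g i) x \<bullet> h))) (at x)"
    using assms by (intro has_derivative_mult_right has_derivative_sum C2_has_derivative_egrad)
  then show "((\<lambda>x. c * (\<Sum>i\<in>I. g i x)) has_derivative (\<lambda>h. (c *\<^sub>R (\<Sum>i\<in>I. egrad (g i) x)) \<bullet> h)) (at x)"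
    by (simp add: inner_sum_left)
qed

lemma Lam_average:
  assumes "finite I" "I \<noteq> {}" "\<And>i. i \<in> I \<Longrightarrow> C2 (g i)"
  shows "Lam (\<lambda>x. (1 / real (card I)) * (\<Sum>i\<in>I. g i x)) lam X
           = (1 / real (card I)) *\<^sub>R (\<Sum>i\<in>I. Lam (g i) lam X)"
proof -
  have n: "real (card I) > 0" using assms by (simp add: card_gt_0_iff)
  have "(\<Sum>i\<in>I. Lam (g i) lam X)
      = mskew ((\<Sum>i\<in>I. egrad (g i) X) ** transpose X) ** X + real (card I) *\<^sub>R (lam *\<^sub>R (X ** orth_defect X))"
    by (simp add: Lam_eq_landing landing_def sum.distrib mskew_sum matrix_mult_sum_left sum_constant_scaleR
        del: sum_constant)
  moreover have "egrad (\<lambda>x. (1 / real (card I)) * (\<Sum>i\<in>I. g i x)) X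
      = (1 / real (card I)) *\<^sub>R (\<Sum>i\<in>I. egrad (g i) X)"
    by (rule egrad_scaled_sum[OF assms(1,3)])
  ultimately show ?thesis using n
    by (simp add: Lam_eq_landing landing_def mskew_scaleR matrix_mult_scaleR_left scaleR_add_right)
qed

section \<open>Expected decrease of the merit function\<close>

lemma mean_power2_norm_eq:
  fixes a :: "'i \<Rightarrow> 'a::real_inner"
  assumes "finite I" "I \<noteq> {}"
  defines "A \<equiv> (1 / real (card I)) *\<^sub>R (\<Sum>i\<in>I. a i)"
  shows "(\<Sum>i\<in>I. (norm (a i))\<^sup>2) / card I = (norm A)\<^sup>2 + (\<Sum>i\<in>I. (norm (a i - A))\<^sup>2) / card I"
proof -
  let ?n = "real (card I)"
  have n: "?n > 0" using assms by (simp add: card_gt_0_iff)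
  have sA: "(\<Sum>i\<in>I. a i) = ?n *\<^sub>R A" using n by (simp add: A_def)
  have "(\<Sum>i\<in>I. (norm (a i - A))\<^sup>2) = (\<Sum>i\<in>I. (norm (a i))\<^sup>2 - 2 * (a i \<bullet> A) + (norm A)\<^sup>2)"
    by (rule sum.cong) (simp_all add: power2_norm_eq_inner inner_diff_left inner_diff_right inner_commute)
  also have "\<dots> = (\<Sum>i\<in>I. (norm (a i))\<^sup>2) - 2 * ((\<Sum>i\<in>I. a i) \<bullet> A) + ?n * (norm A)\<^sup>2"
    by (simp add: sum.distrib sum_subtractf sum_distrib_left inner_sum_left)
  also have "\<dots> = (\<Sum>i\<in>I. (norm (a i))\<^sup>2) - ?n * (norm A)\<^sup>2"
    unfolding sA by (simp add: power2_norm_eq_inner)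
  finally show ?thesis using n by (simp add: field_simps)
qed

lemma expectation_descent_pmf_of_set:
  fixes F :: "'a::real_inner \<Rightarrow> real" and v :: "'i \<Rightarrow> 'a"
  assumes "finite I" "I \<noteq> {}"
    and descent: "\<And>j. j \<in> I \<Longrightarrow> F (Y - eta *\<^sub>R v j) \<le> F Y - eta * (G \<bullet> v j) + Lg/2 * eta\<^sup>2 * (norm (v j))\<^sup>2"
  defines "vbar \<equiv> (1 / real (card I)) *\<^sub>R (\<Sum>j\<in>I. v j)"
  shows "measure_pmf.expectation (pmf_of_set I) (\<lambda>j. F (Y - eta *\<^sub>R v j))
           \<le> F Y - eta * (G \<bullet> vbar)
              + Lg/2 * eta\<^sup>2 * ((norm vbar)\<^sup>2 + (\<Sum>j\<in>I. (norm (v j - vbar))\<^sup>2) / card I)"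
proof -
  let ?n = "real (card I)"
  have n: "?n > 0" using assms by (simp add: card_gt_0_iff)
  have "(\<Sum>j\<in>I. F (Y - eta *\<^sub>R v j))
      \<le> (\<Sum>j\<in>I. F Y - eta * (G \<bullet> v j) + Lg/2 * eta\<^sup>2 * (norm (v j))\<^sup>2)"
    by (rule sum_mono[OF descent])
  also have "\<dots> = ?n * F Y - eta * (G \<bullet> (?n *\<^sub>R vbar)) + Lg/2 * eta\<^sup>2 * (\<Sum>j\<in>I. (norm (v j))\<^sup>2)"
    using n by (simp add: vbar_def sum.distrib sum_subtractf sum_distrib_left inner_sum_right)
  finally have "(\<Sum>j\<in>I. F (Y - eta *\<^sub>R v j)) / ?n
      \<le> F Y - eta * (G \<bullet> vbar) + Lg/2 * eta\<^sup>2 * ((\<Sum>j\<in>I. (norm (v j))\<^sup>2) / ?n)"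
    using n by (simp add: field_simps)
  moreover have "(\<Sum>j\<in>I. (norm (v j))\<^sup>2) / ?n = (norm vbar)\<^sup>2 + (\<Sum>j\<in>I. (norm (v j - vbar))\<^sup>2) / ?n"
    unfolding vbar_def by (rule mean_power2_norm_eq[OF assms(1,2)])
  moreover have "measure_pmf.expectation (pmf_of_set I) (\<lambda>j. F (Y - eta *\<^sub>R v j))
      = (\<Sum>j\<in>I. F (Y - eta *\<^sub>R v j)) / ?n"
    by (rule integral_pmf_of_set[OF assms(2,1)])
  ultimately show ?thesis by simp
qed

lemma Lagr_has_derivative_egrad:
  fixes f :: "real^'p^'n \<Rightarrow> real"
  assumes "C2 f"
  shows "(Lagr f mu has_derivative (\<lambda>H. egrad (Lagr f mu) Y \<bullet> H)) (at Y)"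
proof -
  obtain Hf where "\<And>Y. (egrad f has_derivative Hf Y) (at Y)" using C2_hessian[OF assms] by metis
  note D = has_derivative_Lagr[OF C2_has_derivative_egrad[OF assms] this[of Y], where mu=mu]
  show ?thesis using D by (rule has_derivative_eq_rhs) (simp add: inner_egrad_eq[OF D])
qed

lemma inner_egrad_Lagr_Lam_eq:
  fixes f :: "real^'p^'n \<Rightarrow> real"
  assumes "C2 f" and "(egrad f has_derivative Hf) (at Y)"
  defines "G \<equiv> egrad f Y" and "D \<equiv> orth_defect Y"
  shows "egrad (Lagr f mu) Y \<bullet> Lam f lam Y
    = (norm (mskew (G ** transpose Y)))\<^sup>2 - 1/2 * (G \<bullet> (rgrad f Y ** D))
      - 1/2 * (Hf (Lam f lam Y) \<bullet> (Y ** D)) - 3/2 * lam * (msym (transpose Y ** G) \<bullet> (D ** D))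
      + lam * mu * (norm (Y ** D))\<^sup>2"
  unfolding inner_egrad_eq[OF has_derivative_Lagr[OF C2_has_derivative_egrad[OF assms(1)] assms(2)]]
  using Lagr_derivative_landing_eq[where X=Y and G=G and HV="Hf (Lam f lam Y)" and lam=lam and mu=mu]
  by (simp add: G_def D_def Lam_eq_landing rgrad_eq)

lemma inner_egrad_Lagr_Lam_ge_cross_terms:
  fixes f :: "real^'p^'n \<Rightarrow> real" and Y :: "real^'p^'n"
  assumes f: "C2 f"
    and Hf: "(egrad f has_derivative Hf) (at Y)" and Hf_le: "\<And>H. norm (Hf H) \<le> L * norm H"
    and grad_le: "norm (egrad f Y) \<le> L'" and sym_le: "norm (msym (transpose Y ** egrad f Y)) \<le> s"
    and "L \<ge> 0" "lam > 0"
  defines "g \<equiv> norm (rgrad f Y)" and "d \<equiv> norm (orth_defect Y)" and "w \<equiv> norm (Y ** orth_defect Y)"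
  shows "egrad (Lagr f mu) Y \<bullet> Lam f lam Y \<ge> (norm (mskew (egrad f Y ** transpose Y)))\<^sup>2
           - 1/2*L'*g*d - 1/2*L*(g + lam*w)*w - 3/2*lam * s * d\<^sup>2 + lam*mu*w\<^sup>2"
proof -
  define G D where "G = egrad f Y" and "D = orth_defect Y"
  define R W S where "R = rgrad f Y" and "W = Y ** D" and "S = msym (transpose Y ** G)"
  let ?V = "Lam f lam Y"
  have "G \<bullet> (R ** D) \<le> L' * g * d"
  proof -
    have "G \<bullet> (R ** D) \<le> norm G * (g * d)"
      using norm_cauchy_schwarz[of G "R ** D"] norm_matrix_mult_le[of R D]
      by (simp add: g_def d_def R_def D_def) (meson mult_left_mono norm_ge_zero order_trans)
    also have "\<dots> \<le> L' * (g * d)"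
      using grad_le unfolding G_def g_def d_def by (intro mult_right_mono) simp_all
    finally show ?thesis by (simp add: mult_ac)
  qed
  then have A: "1/2 * (G \<bullet> (R ** D)) \<le> 1/2*L'*g*d" by simp
  have "Hf ?V \<bullet> W \<le> L * (g + lam * w) * w"
  proof -
    have "norm ?V \<le> g + lam * w"
      using \<open>lam > 0\<close> norm_triangle_ineq[of R "lam *\<^sub>R W"]
      by (simp add: Lam_eq_landing landing_def rgrad_eq R_def g_def w_def W_def D_def)
    then have "norm (Hf ?V) \<le> L * (g + lam * w)"
      using Hf_le[of ?V] \<open>L \<ge> 0\<close> by (meson mult_left_mono order_trans)
    then have "norm (Hf ?V) * w \<le> L * (g + lam * w) * w"
      by (rule mult_right_mono) (simp add: w_def)
    then show ?thesis using norm_cauchy_schwarz[of "Hf ?V" W] by (simp add: w_def W_def D_def)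
  qed
  then have B: "1/2 * (Hf ?V \<bullet> W) \<le> 1/2*L*(g + lam*w)*w" by simp
  have "S \<bullet> (D ** D) \<le> s * d\<^sup>2"
  proof -
    have "S \<bullet> (D ** D) \<le> norm S * norm (D ** D)" by (rule norm_cauchy_schwarz)
    also have "\<dots> \<le> norm S * d\<^sup>2" unfolding d_def D_def by (intro mult_left_mono norm_matrix_square_le) simp
    also have "\<dots> \<le> s * d\<^sup>2" using sym_le unfolding S_def G_def by (intro mult_right_mono) simp_all
    finally show ?thesis .
  qed
  then have C: "3/2*lam * (S \<bullet> (D ** D)) \<le> 3/2*lam * s * d\<^sup>2"
    using \<open>lam > 0\<close> by (simp add: mult.assoc)
  have E: "lam * mu * (norm W)\<^sup>2 = lam*mu*w\<^sup>2" by (simp add: w_def W_def D_def)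
  show ?thesis
    unfolding inner_egrad_Lagr_Lam_eq[OF f Hf] G_def[symmetric] D_def[symmetric] R_def[symmetric]
      W_def[symmetric] S_def[symmetric]
    using A B C E by linarith
qed

lemma inner_egrad_Lagr_Lam_ge:
  fixes f :: "real^'p^'n \<Rightarrow> real" and Y :: "real^'p^'n"
  assumes f: "C2 f"
    and Hf: "(egrad f has_derivative Hf) (at Y)" and Hf_le: "\<And>H. norm (Hf H) \<le> L * norm H"
    and grad_le: "norm (egrad f Y) \<le> L'" and sym_le: "norm (msym (transpose Y ** egrad f Y)) \<le> s"
    and Y: "Y \<in> Stiefel_eps eps"
    and "L > 0" "lam > 0" "0 < eps" "eps < 3/4"
    and mu: "mu \<ge> 2/(3-4*eps)*(L*(1-eps) + 3 * s + (max L L')\<^sup>2*(1+eps)\<^sup>2/(lam*(1-eps)))"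
  shows "egrad (Lagr f mu) Y \<bullet> Lam f lam Y
           \<ge> (norm (rgrad f Y))\<^sup>2/2 + lam*mu*(norm (orth_defect Y))\<^sup>2/4"
proof -
  let ?P = "(norm (mskew (egrad f Y ** transpose Y)))\<^sup>2"
  define g d w where "g = norm (rgrad f Y)" and "d = norm (orth_defect Y)"
    and "w = norm (Y ** orth_defect Y)"
  have "?P - 1/2*L'*g*d - 1/2*L*(g + lam*w)*w - 3/2*lam * s * d\<^sup>2 + lam*mu*w\<^sup>2 \<ge> g\<^sup>2/2 + lam*mu*d\<^sup>2/4"
  proof (rule landing_decrease_rate_ge)
    show "g\<^sup>2 \<le> (1 + d) * ?P" unfolding g_def d_def rgrad_eq by (rule power2_norm_right_mult_le)
    show "(1 - d) * d\<^sup>2 \<le> w\<^sup>2" "w\<^sup>2 \<le> (1 + d) * d\<^sup>2"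
      unfolding w_def d_def by (rule power2_norm_left_mult_bounds(2), rule power2_norm_left_mult_bounds(1))
    show "d \<le> eps" using Y by (simp add: Stiefel_eps_iff d_def)
    show "0 \<le> L'" "0 \<le> s" using grad_le sym_le norm_ge_zero order_trans by blast+
  qed (use assms(7-11) in \<open>simp_all add: d_def g_def w_def\<close>)
  moreover have "egrad (Lagr f mu) Y \<bullet> Lam f lam Y
      \<ge> ?P - 1/2*L'*g*d - 1/2*L*(g + lam*w)*w - 3/2*lam * s * d\<^sup>2 + lam*mu*w\<^sup>2"
    unfolding g_def d_def w_def
    using assms(7,8) by (intro inner_egrad_Lagr_Lam_ge_cross_terms[OF f Hf Hf_le grad_le sym_le]) simp_all
  ultimately show ?thesis by (simp add: g_def d_def)
qed

lemma expected_Lagr_decrease: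
  fixes fi :: "'i \<Rightarrow> real^'p^'n \<Rightarrow> real" and Y :: "real^'p^'n"
  assumes I: "finite I" "I \<noteq> {}" and fi: "\<And>i. i \<in> I \<Longrightarrow> C2 (fi i)"
  defines "f \<equiv> \<lambda>X. (1 / real (card I)) * (\<Sum>i\<in>I. fi i X)"
  assumes Y: "Y \<in> Stiefel_eps eps"
    and Hf: "(egrad f has_derivative Hf) (at Y)" and Hf_le: "\<And>H. norm (Hf H) \<le> L * norm H"
    and grad_le: "norm (egrad f Y) \<le> L'" and sym_le: "norm (msym (transpose Y ** egrad f Y)) \<le> s"
    and L: "L > 0" and lam: "lam > 0" and eps: "0 < eps" "eps < 3/4"
    and mu: "mu \<ge> 2/(3-4*eps)*(L*(1-eps) + 3 * s + (max L L')\<^sup>2*(1+eps)\<^sup>2/(lam*(1-eps)))"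
    and Lg: "Lg > 0"
    and Lipschitz: "\<forall>X\<in>Stiefel_eps eps. \<forall>Z\<in>Stiefel_eps eps.
                      norm (egrad (Lagr f mu) X - egrad (Lagr f mu) Z) \<le> Lg * norm (X - Z)"
    and segment: "\<And>j tau. j \<in> I \<Longrightarrow> 0 \<le> tau \<Longrightarrow> tau \<le> eta \<Longrightarrow>
                      Y - tau *\<^sub>R Lam (fi j) lam Y \<in> Stiefel_eps eps"
    and variance: "(1 / real (card I)) * (\<Sum>j\<in>I. (norm (Lam (fi j) lam Y - Lam f lam Y))\<^sup>2) \<le> B"
    and eta: "eta > 0" "eta \<le> 1/(2*Lg)" "eta \<le> lam*mu/(4*lam\<^sup>2*Lg*(1+eps))"
  shows "measure_pmf.expectation (pmf_of_set I) (\<lambda>j. Lagr f mu (Y - eta *\<^sub>R Lam (fi j) lam Y))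
           \<le> Lagr f mu Y - eta/4 * (norm (rgrad f Y))\<^sup>2 - eta * (lam*mu)/2 * Ncal Y + Lg * B * eta\<^sup>2/2"
proof -
  define g d w where "g = norm (rgrad f Y)" and "d = norm (orth_defect Y)"
    and "w = norm (Y ** orth_defect Y)"
  have C2f: "C2 f" unfolding f_def using I fi by (intro C2_cmult C2_sum)
  have average: "Lam f lam Y = (1 / real (card I)) *\<^sub>R (\<Sum>j\<in>I. Lam (fi j) lam Y)"
    unfolding f_def by (rule Lam_average[OF I fi])
  let ?E = "measure_pmf.expectation (pmf_of_set I) (\<lambda>j. Lagr f mu (Y - eta *\<^sub>R Lam (fi j) lam Y))"
  let ?V = "(\<Sum>j\<in>I. (norm (Lam (fi j) lam Y - Lam f lam Y))\<^sup>2) / card I"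
  have "?E \<le> Lagr f mu Y - eta * (egrad (Lagr f mu) Y \<bullet> Lam f lam Y)
              + Lg/2 * eta\<^sup>2 * ((norm (Lam f lam Y))\<^sup>2 + ?V)"
    unfolding average
    using eta(1) by (intro expectation_descent_pmf_of_set[OF I] descent_lemma_segment[OF
        Lagr_has_derivative_egrad[OF C2f] segment Lipschitz]) simp_all
  also have "(norm (Lam f lam Y))\<^sup>2 = g\<^sup>2 + lam\<^sup>2 * w\<^sup>2"
    by (simp add: Lam_eq_landing power2_norm_landing g_def w_def rgrad_eq)
  finally have "?E \<le> Lagr f mu Y - eta * (egrad (Lagr f mu) Y \<bullet> Lam f lam Y)
              + (Lg/2 * eta\<^sup>2 * (g\<^sup>2 + lam\<^sup>2 * w\<^sup>2) + Lg/2 * eta\<^sup>2 * ?V)"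
    by (simp only: distrib_left)
  moreover have "Lg/2 * eta\<^sup>2 * ?V \<le> Lg * B * eta\<^sup>2/2"
    using variance Lg mult_left_mono[of ?V B "Lg/2 * eta\<^sup>2"] by (simp add: mult_ac)
  moreover have "egrad (Lagr f mu) Y \<bullet> Lam f lam Y \<ge> g\<^sup>2/2 + lam*mu*d\<^sup>2/4"
    unfolding g_def d_def using C2f Hf Hf_le grad_le sym_le Y L lam eps mu
    by (rule inner_egrad_Lagr_Lam_ge)
  then have "eta * (egrad (Lagr f mu) Y \<bullet> Lam f lam Y) \<ge> eta * (g\<^sup>2/2 + lam*mu*d\<^sup>2/4)"
    using eta(1) by simp
  moreover have "Lg*eta/2 * (g\<^sup>2 + lam\<^sup>2 * w\<^sup>2) \<le> g\<^sup>2/4 + lam*mu*d\<^sup>2/8"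
  proof (rule second_order_term_le[OF Lg eta(1) lam eps(1) _ eta(2,3)])
    show "0 \<le> mu"
      using mu_condition_nonneg[OF eps lam L _ mu] sym_le norm_ge_zero order_trans by blast
    show "w\<^sup>2 \<le> (1 + eps) * d\<^sup>2" unfolding w_def d_def using Y by (rule power2_norm_normal_le)
  qed
  then have "Lg/2 * eta\<^sup>2 * (g\<^sup>2 + lam\<^sup>2 * w\<^sup>2) \<le> eta * (g\<^sup>2/4 + lam*mu*d\<^sup>2/8)"
    using eta(1) mult_left_mono[of _ _ eta] by (simp add: power2_eq_square mult_ac)
  moreover have "eta * (g\<^sup>2/2 + lam*mu*d\<^sup>2/4) - eta * (g\<^sup>2/4 + lam*mu*d\<^sup>2/8)
      = eta/4 * g\<^sup>2 + eta * (lam*mu)/2 * Ncal Y"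
    by (simp add: Ncal_eq d_def algebra_simps)
  ultimately show ?thesis unfolding g_def[symmetric] by linarith
qed

lemma norm_egrad_le_Sup_Stiefel_eps:
  assumes "C2 g" "Y \<in> Stiefel_eps eps"
  shows "norm (egrad g Y) \<le> Sup {norm (egrad g X) | X. X \<in> Stiefel_eps eps}"
  using assms by (intro norm_le_Sup_compact compact_Stiefel_eps C2_continuous_egrad)

lemma norm_msym_egrad_le_Sup_Stiefel_eps:
  fixes g :: "real^'p^'n \<Rightarrow> real"
  assumes "C2 g" "Y \<in> Stiefel_eps eps"
  shows "norm (msym (transpose Y ** egrad g Y))
           \<le> Sup {norm (msym (transpose X ** egrad g X)) | X. X \<in> Stiefel_eps eps}"
  using assms
  by (intro norm_le_Sup_compact compact_Stiefel_eps bounded_linear.continuous_on[OF bounded_linear_msym]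
      bounded_bilinear.continuous_on[OF bounded_bilinear_matrix_mult]
      bounded_linear.continuous_on[OF bounded_linear_transpose] continuous_on_id C2_continuous_egrad)

lemma Lam_step_in_Stiefel_eps:
  fixes g :: "'i \<Rightarrow> real^'p^'n \<Rightarrow> real"
  assumes "finite I" "\<And>i. i \<in> I \<Longrightarrow> C2 (g i)" "j \<in> I" "Y \<in> Stiefel_eps eps"
    and "lam > 0" "0 < eps" "eps < 1" "0 \<le> tau"
    and "tau \<le> eta_star (Sup {norm (rgrad (g i) X) | X i. X \<in> Stiefel_eps eps \<and> i \<in> I}) eps lam"
  shows "Y - tau *\<^sub>R Lam (g j) lam Y \<in> Stiefel_eps eps"
proof -
  have "norm (rgrad (g j) Y) \<le> Sup {norm (rgrad (g i) X) | X i. X \<in> Stiefel_eps eps \<and> i \<in> I}"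
    using assms by (intro norm_le_Sup_compact_family compact_Stiefel_eps C2_continuous_rgrad) auto
  then show ?thesis
    unfolding Lam_eq_landing using assms by (intro landing_step_in_Stiefel_eps) (simp_all add: rgrad_eq)
qed

theorem proposition10:
  fixes fi :: "nat \<Rightarrow> real^'p^'n \<Rightarrow> real"
    and N :: nat and lam eps L mu Lg B :: real
    and X :: "nat \<Rightarrow> real^'p^'n" and eta :: "nat \<Rightarrow> real" and idx :: "nat \<Rightarrow> nat"
    and f :: "real^'p^'n \<Rightarrow> real" and L' Lhat s nu atil etas :: real
  assumes np: "CARD('p) \<le> CARD('n)"
    and lam: "lam > 0"
    and eps: "0 < eps" "eps < 3/4"
    and N: "N \<ge> 1"
    and C2: "\<forall>i\<in>{1..N}. C2 (fi i)"
  defines "f \<equiv> (\<lambda>X. (1 / real N) * (\<Sum>i=1..N. fi i X))"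
  assumes L: "L > 0"
    and Lip: "\<forall>X\<in>Stiefel_eps eps. \<forall>Y\<in>Stiefel_eps eps.
                 norm (egrad f X - egrad f Y) \<le> L * norm (X - Y)"
  defines "L' \<equiv> Sup {norm (egrad f X) | X. X \<in> Stiefel_eps eps}"
    and "Lhat \<equiv> max L L'"
    and "s \<equiv> Sup {norm (msym (transpose X ** egrad f X)) | X. X \<in> Stiefel_eps eps}"
  assumes mu: "mu \<ge> 2 / (3 - 4 * eps) *
                 (L * (1 - eps) + 3 * s + Lhat\<^sup>2 * (1 + eps)\<^sup>2 / (lam * (1 - eps)))"
  defines "nu \<equiv> lam * mu"
  assumes Lg: "Lg > 0"
    and LgLip: "\<forall>X\<in>Stiefel_eps eps. \<forall>Y\<in>Stiefel_eps eps.
                 norm (egrad (Lagr f mu) X - egrad (Lagr f mu) Y) \<le> Lg * norm (X - Y)"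
    and B: "B > 0"
    and Bvar: "\<forall>X\<in>Stiefel_eps eps.
                 (1 / real N) * (\<Sum>i=1..N. (norm (Lam (fi i) lam X - Lam f lam X))\<^sup>2) \<le> B"
  defines "atil \<equiv> Sup {norm (rgrad (fi i) X) | X i. X \<in> Stiefel_eps eps \<and> i \<in> {1..N}}"
    and "etas \<equiv> eta_star atil eps lam"
  assumes X0: "X 0 \<in> Stiefel_eps eps"
    and idx: "\<forall>k. idx k \<in> {1..N}"
    and Xrec: "\<forall>k. X (Suc k) = X k - eta k *\<^sub>R Lam (fi (idx k)) lam (X k)"
    and eta_pos: "\<forall>k. eta k > 0"
    and eta_le: "\<forall>k. eta k \<le> min (1 / (2 * Lg)) (min (nu / (4 * lam\<^sup>2 * Lg * (1 + eps))) etas)"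
  shows "\<forall>k. measure_pmf.expectation (pmf_of_set {1..N})
                 (\<lambda>j. Lagr f mu (X k - eta k *\<^sub>R Lam (fi j) lam (X k)))
           \<le> Lagr f mu (X k) - eta k / 4 * (norm (rgrad f (X k)))\<^sup>2
              - eta k * nu / 2 * Ncal (X k) + Lg * B * (eta k)\<^sup>2 / 2"
proof -
  let ?St = "Stiefel_eps eps :: (real^'p^'n) set"
  have I: "finite {1..N}" "{1..N} \<noteq> {}" "card {1..N} = N" using N by auto
  have C2f: "C2 f" unfolding f_def using C2 I by (intro C2_cmult C2_sum) auto
  obtain Hf where Hf: "\<And>Y. (egrad f has_derivative Hf Y) (at Y)" "\<And>H. continuous_on UNIV (\<lambda>Y. Hf Y H)"
    using C2_hessian[OF C2f] by metis
  have step: "Y - tau *\<^sub>R Lam (fi j) lam Y \<in> ?St"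
    if "Y \<in> ?St" "j \<in> {1..N}" "0 \<le> tau" "tau \<le> etas" for Y j tau
    using that C2 lam eps unfolding etas_def atil_def by (intro Lam_step_in_Stiefel_eps[OF I(1)]) auto
  have X: "X k \<in> ?St" for k
    using X0 idx Xrec eta_pos eta_le step by (induction k) (auto simp: less_imp_le)
  show ?thesis unfolding nu_def
  proof (intro allI expected_Lagr_decrease[where I="{1..N}" and fi=fi, unfolded I(3), folded f_def])
    show "norm (Hf (X k) H) \<le> L * norm H" for k H
      using eps by (intro norm_derivative_le_Lipschitz_Stiefel_eps[OF Hf Lip _ _ X]) simp_all
    show "X k - tau *\<^sub>R Lam (fi j) lam (X k) \<in> ?St" if "j \<in> {1..N}" "0 \<le> tau" "tau \<le> eta k" for k j tau
      using that eta_le X by (intro step) (auto intro: order_trans)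
  qed (use I C2 C2f Hf X L lam eps mu LgLip Lg Bvar eta_pos eta_le in
        \<open>auto simp: L'_def s_def Lhat_def nu_def
           intro: norm_egrad_le_Sup_Stiefel_eps norm_msym_egrad_le_Sup_Stiefel_eps\<close>)
qed

end
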